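(* Let $p$ be an odd prime, $q=p^m$ with $m>1$, and $S=S_\Lambda(q)$. Then $V=\Lambda(q)$ and $U[V,S]$ are the unique normal subgroups of $S$ of index $q$ which have exponent $p$. In particular, $U[V,S]$ is characteristic in $S$.
   Context: Let $\mathbb{K}=\mathbb{F}_q$; $V_p(q)$ is the $\mathbb{K}$-space of homogeneous polynomials of degree $p$ in $\mathbb{K}[x,y]$ with right $\mathrm{GL}_2(\mathbb{K})$-action $f\cdot\begin{pmatrix}a&b\\c&d\end{pmatrix}=f(ax+by,cx+dy)$; $\Lambda(q)=\mathrm{Hom}_{\mathbb{K}}(V_p(q),\mathbb{K})$ with $(w)(\eta g)=(wg^{-1})\eta$. $U=\{\begin{pmatrix}1&0\\c&1\end{pmatrix}:c\in\mathbb{K}\}$ and $S_\Lambda(q)=U\ltimes\Lambda(q)$, with $U$ and $V=\Lambda(q)$ identified as subgroups of $S$; $[V,S]$ is the commutator subgroup. *)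

theory Defs
  imports "HOL-Algebra.Algebra" "HOL-Computational_Algebra.Polynomial"
begin

text \<open>Bivariate polynomials K[x,y] are represented as K[x][y], i.e. the type 'k poly poly:
  coeff (coeff f j) i is the coefficient of x^i y^j.\<close>

definition bX :: "'k::comm_ring_1 poly poly" where "bX = [:[:0, 1:]:]"
definition bY :: "'k::comm_ring_1 poly poly" where "bY = [:0, 1:]"

definition bsubst :: "'k::comm_ring_1 poly poly \<Rightarrow> 'k poly poly \<Rightarrow> 'k poly poly \<Rightarrow> 'k poly poly" where
  "bsubst f A B = poly (map_poly (\<lambda>c. poly (map_poly (\<lambda>k. [:[:k:]:]) c) A) f) B"

definition homog :: "nat \<Rightarrow> 'k::comm_ring_1 poly poly \<Rightarrow> bool" where
  "homog n f \<longleftrightarrow> (\<forall>i j. coeff (coeff f j) i \<noteq> 0 \<longrightarrow> i + j = n)"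

definition Vhom :: "nat \<Rightarrow> 'k::field poly poly set" where
  "Vhom n = {f. homog n f}"

text \<open>2x2 matrices (a,b,c,d) = ((a,b),(c,d)); right action f.g = f(ax+by, cx+dy).\<close>
type_synonym 'k mat2 = "'k \<times> 'k \<times> 'k \<times> 'k"

definition hact :: "'k::field poly poly \<Rightarrow> 'k mat2 \<Rightarrow> 'k poly poly" where
  "hact f g = (case g of (a, b, c, d) \<Rightarrow>
     bsubst f ([:[:a:]:] * bX + [:[:b:]:] * bY) ([:[:c:]:] * bX + [:[:d:]:] * bY))"

definition mat2_inv :: "'k::field mat2 \<Rightarrow> 'k mat2" where
  "mat2_inv g = (case g of (a, b, c, d) \<Rightarrow>
     (let \<delta> = a * d - b * c in (d / \<delta>, - b / \<delta>, - c / \<delta>, a / \<delta>)))"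

text \<open>Lambda(q) = Hom_K(V_n(q), K); linear functionals, extended by 0 outside V_n(q).\<close>
definition Lambda :: "nat \<Rightarrow> ('k::field poly poly \<Rightarrow> 'k) set" where
  "Lambda n = {\<eta>. (\<forall>f\<in>Vhom n. \<forall>g\<in>Vhom n. \<eta> (f + g) = \<eta> f + \<eta> g)
                 \<and> (\<forall>a. \<forall>f\<in>Vhom n. \<eta> (smult [:a:] f) = a * \<eta> f)
                 \<and> (\<forall>f. f \<notin> Vhom n \<longrightarrow> \<eta> f = 0)}"

definition dact :: "nat \<Rightarrow> ('k::field poly poly \<Rightarrow> 'k) \<Rightarrow> 'k mat2 \<Rightarrow> ('k poly poly \<Rightarrow> 'k)" where
  "dact n \<eta> g = (\<lambda>w. if w \<in> Vhom n then \<eta> (hact w (mat2_inv g)) else 0)"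

definition umat :: "'k::field \<Rightarrow> 'k mat2" where "umat c = (1, 0, c, 1)"

text \<open>S_Lambda(q) = U \<ltimes> Lambda(q); the pair (c, \<eta>) stands for u_c \<eta>, so that
  (u_c1 \<eta>1)(u_c2 \<eta>2) = u_(c1+c2) ((\<eta>1 u_c2) + \<eta>2), i.e. \<eta>^u = u^-1 \<eta> u = \<eta> u.\<close>
definition S_Lambda :: "nat \<Rightarrow> ('k::{field,finite} \<times> ('k poly poly \<Rightarrow> 'k)) monoid" where
  "S_Lambda n = \<lparr> partial_object.carrier = UNIV \<times> Lambda n,
      monoid.mult = (\<lambda>(c1, \<eta>1) (c2, \<eta>2). (c1 + c2, (\<lambda>w. dact n \<eta>1 (umat c2) w + \<eta>2 w))),
      monoid.one = (0, (\<lambda>_. 0)) \<rparr>"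

definition U_sub :: "nat \<Rightarrow> ('k::{field,finite} \<times> ('k poly poly \<Rightarrow> 'k)) set" where
  "U_sub n = {(c, (\<lambda>_. 0)) | c. True}"

definition V_sub :: "nat \<Rightarrow> ('k::{field,finite} \<times> ('k poly poly \<Rightarrow> 'k)) set" where
  "V_sub n = {(0, \<eta>) | \<eta>. \<eta> \<in> Lambda n}"

definition comm_sub :: "('a, 'b) monoid_scheme \<Rightarrow> 'a set \<Rightarrow> 'a set \<Rightarrow> 'a set" where
  "comm_sub G A B = generate G
     {a \<otimes>\<^bsub>G\<^esub> b \<otimes>\<^bsub>G\<^esub> inv\<^bsub>G\<^esub> a \<otimes>\<^bsub>G\<^esub> inv\<^bsub>G\<^esub> b | a b. a \<in> A \<and> b \<in> B}"

definition has_exponent :: "('a, 'b) monoid_scheme \<Rightarrow> 'a set \<Rightarrow> nat \<Rightarrow> bool" where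
  "has_exponent G H e \<longleftrightarrow> 0 < e \<and> (\<forall>x\<in>H. x [^]\<^bsub>G\<^esub> e = \<one>\<^bsub>G\<^esub>)
     \<and> (\<forall>k. 0 < k \<and> (\<forall>x\<in>H. x [^]\<^bsub>G\<^esub> k = \<one>\<^bsub>G\<^esub>) \<longrightarrow> e \<le> k)"

definition characteristic :: "('a, 'b) monoid_scheme \<Rightarrow> 'a set \<Rightarrow> bool" where
  "characteristic G H \<longleftrightarrow> (\<forall>\<phi>\<in>iso G G. \<phi> ` H = H)"

end

theory Submission
  imports Defs "HOL-Number_Theory.Residues" "HOL-Library.Function_Algebras"
begin

(* Write u_c \<eta> as the pair (c, \<eta>). In the basis of \<Lambda> dual to the monomials x^(p-i) y^i,
   u_t acts by the unipotent matrix with entries (i choose k) (-t)^(i-k). Summing over the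
   powers of u_c and using that \<Sum>_{r<p} r^d vanishes in characteristic p unless d = p - 1,
   one finds (c, \<eta>)^p = (0, -c^(p-1) \<eta>(x^p) \<delta>) for a fixed \<delta> \<noteq> 0. So (c, \<eta>)^p = 1 iff
   c = 0 or \<eta>(x^p) = 0, and a subgroup of exponent p lies in V or in
   M = {(c, \<eta>). \<eta>(x^p) = 0}. Both have index q, which leaves exactly V and M.

   The commutators of V with U are the differences \<eta> u_t - \<eta>, and they span the hyperplane
   {\<eta>(x^p) = 0} of V: going down from i = p - 1, the dual basis vectors \<delta>_i with 2 \<le> i < p
   are obtained one at a time, while \<delta>_1 and \<delta>_p only occur in the combinations
   s \<delta>_1 + s^p \<delta>_p, which can be separated because q > p yields some s with s^p \<noteq> s.
   Hence U[V,S] = M. An automorphism permutes {V, M} and cannot map the non-abelian M onto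
   the abelian V, so M is characteristic. *)

section \<open>Group-theoretic preliminaries\<close>

locale additive_hom =
  group G for G :: "('a, 'm) monoid_scheme" (structure) and f :: "'a \<Rightarrow> 'b::ab_group_add" +
  assumes additive: "x \<in> carrier G \<Longrightarrow> y \<in> carrier G \<Longrightarrow> f (x \<otimes> y) = f x + f y"
begin

lemma hom_one: "f \<one> = 0"
  using additive[of \<one> \<one>] by simp

lemma hom_inv: "x \<in> carrier G \<Longrightarrow> f (inv x) = - f x"
  using additive[of "inv x" x] hom_one by (simp add: eq_neg_iff_add_eq_0)

lemma kernel_subgroup: "subgroup {x \<in> carrier G. f x = 0} G"
  by (rule subgroupI) (auto simp: additive hom_inv hom_one)

lemma kernel_normal: "{x \<in> carrier G. f x = 0} \<lhd> G"
  unfolding normal_inv_iff using kernel_subgroup by (auto simp: additive hom_inv)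

lemma hom_commutator: "a \<in> carrier G \<Longrightarrow> b \<in> carrier G \<Longrightarrow> f (a \<otimes> b \<otimes> inv a \<otimes> inv b) = 0"
  by (simp add: additive hom_inv)

lemma comm_sub_subset_kernel:
  assumes "A \<subseteq> carrier G" and "B \<subseteq> carrier G"
  shows "comm_sub G A B \<subseteq> {x \<in> carrier G. f x = 0}"
  unfolding comm_sub_def
proof (rule generate_subgroup_incl[OF _ kernel_subgroup])
  show "{a \<otimes> b \<otimes> inv a \<otimes> inv b |a b. a \<in> A \<and> b \<in> B} \<subseteq> {x \<in> carrier G. f x = 0}"
    using assms by (auto simp: hom_commutator subsetD)
qed

end

lemma has_exponent_primeI:
  fixes G (structure)
  assumes "group G" and prime: "Factorial_Ring.prime p" and "H \<subseteq> carrier G"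
    and killed: "\<And>x. x \<in> H \<Longrightarrow> x [^] p = \<one>"
    and "a \<in> H" and "a \<noteq> \<one>"
  shows "has_exponent G H p"
proof -
  interpret group G by fact
  have a: "a \<in> carrier G" using assms by blast
  have "ord a dvd p" using killed[OF \<open>a \<in> H\<close>] pow_eq_id[OF a] by simp
  moreover have "ord a \<noteq> 1" using ord_eq_1[OF a] \<open>a \<noteq> \<one>\<close> by simp
  ultimately have ord_a: "ord a = p" using prime unfolding prime_nat_iff by blast
  have "p \<le> k" if "0 < k" and "\<forall>x\<in>H. x [^] k = \<one>" for k
  proof -
    have "a [^] k = \<one>" using that(2) \<open>a \<in> H\<close> by blast
    then have "p dvd k" using pow_eq_id[OF a] ord_a by simp
    then show ?thesis using \<open>0 < k\<close> by (simp add: dvd_imp_le)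
  qed
  then show ?thesis
    unfolding has_exponent_def using killed prime_gt_0_nat[OF prime] by blast
qed

lemma has_exponent_iso_image:
  fixes G (structure)
  assumes "group G" and \<phi>: "\<phi> \<in> iso G G" and H: "H \<subseteq> carrier G" and "has_exponent G H e"
  shows "has_exponent G (\<phi> ` H) e"
proof -
  interpret group G by fact
  have hom: "group_hom G G \<phi>"
    using assms by (simp add: group_hom_def group_hom_axioms_def iso_def)
  have inj: "inj_on \<phi> (carrier G)" using \<phi> by (simp add: iso_def bij_betw_def)
  have killed_iff: "\<phi> x [^] k = \<one> \<longleftrightarrow> x [^] k = \<one>" if x: "x \<in> carrier G" for x and k :: nat
  proof -
    have "\<phi> x [^] k = \<one> \<longleftrightarrow> \<phi> (x [^] k) = \<phi> \<one>"
      using group_hom.hom_nat_pow[OF hom x] group_hom.hom_one[OF hom] by simp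
    also have "\<dots> \<longleftrightarrow> x [^] k = \<one>"
      using inj x by (auto dest: inj_onD)
    finally show ?thesis .
  qed
  have "(\<forall>y\<in>\<phi> ` H. y [^] k = \<one>) \<longleftrightarrow> (\<forall>x\<in>H. x [^] k = \<one>)" for k :: nat
    using H killed_iff by auto
  then show ?thesis using assms(4) unfolding has_exponent_def by simp
qed

lemma card_rcosets_iso_image:
  fixes G (structure)
  assumes "group G" and "finite (carrier G)" and \<phi>: "\<phi> \<in> iso G G" and H: "subgroup H G"
  shows "card (rcosets (\<phi> ` H)) = card (rcosets H)"
proof -
  interpret group G by fact
  have hom: "group_hom G G \<phi>"
    using assms by (simp add: group_hom_def group_hom_axioms_def iso_def)
  have inj: "inj_on \<phi> (carrier G)" using \<phi> by (simp add: iso_def bij_betw_def)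
  have card_img: "card (\<phi> ` H) = card H"
    using card_image[OF inj_on_subset[OF inj subgroup.subset[OF H]]] .
  have "finite H" using finite_subset[OF subgroup.subset[OF H] assms(2)] .
  moreover have "H \<noteq> {}" using subgroup.one_closed[OF H] by blast
  ultimately have "card H \<noteq> 0" by simp
  moreover have "card (rcosets (\<phi> ` H)) * card H = card (rcosets H) * card H"
    using lagrange[OF H] lagrange[OF group_hom.subgroup_img_is_subgroup[OF hom H]] card_img by simp
  ultimately show ?thesis by simp
qed

lemma characteristic_if_unique_noncommutative:
  fixes G (structure)
  assumes "group G" and "finite (carrier G)"
    and family: "{N. N \<lhd> G \<and> card (rcosets N) = r \<and> has_exponent G N e} = {A, B}"
    and A_comm: "\<And>x y. x \<in> A \<Longrightarrow> y \<in> A \<Longrightarrow> x \<otimes> y = y \<otimes> x"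
    and a: "a \<in> B" and b: "b \<in> B" and "a \<otimes> b \<noteq> b \<otimes> a"
  shows "characteristic G B"
  unfolding characteristic_def
proof
  interpret group G by fact
  fix \<phi> assume \<phi>: "\<phi> \<in> iso G G"
  have "B \<in> {N. N \<lhd> G \<and> card (rcosets N) = r \<and> has_exponent G N e}"
    unfolding family by simp
  then have B: "B \<lhd> G" "card (rcosets B) = r" "has_exponent G B e" by auto
  have B_carrier: "B \<subseteq> carrier G" using subgroup.subset[OF normal_imp_subgroup[OF B(1)]] .
  have "\<phi> ` B \<lhd> G" using iso_normal_subgroup[OF \<phi> \<open>group G\<close> \<open>group G\<close> B(1)] .
  moreover have "card (rcosets (\<phi> ` B)) = r"
    using card_rcosets_iso_image[OF \<open>group G\<close> assms(2) \<phi> normal_imp_subgroup[OF B(1)]] B(2) by simp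
  moreover have "has_exponent G (\<phi> ` B) e"
    using has_exponent_iso_image[OF \<open>group G\<close> \<phi> B_carrier B(3)] .
  ultimately have "\<phi> ` B \<in> {N. N \<lhd> G \<and> card (rcosets N) = r \<and> has_exponent G N e}" by simp
  then have "\<phi> ` B = A \<or> \<phi> ` B = B" unfolding family by simp
  moreover have "\<phi> ` B \<noteq> A"
  proof
    assume image_B: "\<phi> ` B = A"
    have ab: "a \<in> carrier G" "b \<in> carrier G" using B_carrier a b by auto
    have hom: "\<phi> \<in> hom G G" and inj: "inj_on \<phi> (carrier G)"
      using \<phi> by (simp_all add: iso_def bij_betw_def)
    have "\<phi> (a \<otimes> b) = \<phi> a \<otimes> \<phi> b" using hom ab by (simp add: hom_mult)
    also have "\<dots> = \<phi> b \<otimes> \<phi> a"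
      using A_comm image_B imageI[OF a, of \<phi>] imageI[OF b, of \<phi>] by simp
    also have "\<dots> = \<phi> (b \<otimes> a)" using hom ab by (simp add: hom_mult)
    finally have "a \<otimes> b = b \<otimes> a"
      by (rule inj_onD[OF inj _ m_closed[OF ab] m_closed[OF ab(2,1)]])
    then show False using assms(7) by contradiction
  qed
  ultimately show "\<phi> ` B = B" by simp
qed

section \<open>Arithmetic in a finite field of characteristic p\<close>

lemma odd_prime_ge_3: "Factorial_Ring.prime (p::nat) \<Longrightarrow> odd p \<Longrightarrow> 3 \<le> p"
  using prime_ge_2_nat[of p] by (cases "p = 2") auto

lemma CHAR_eq_if_card_prime_power:
  assumes "Factorial_Ring.prime p" and "card (UNIV :: 'k::{field,finite} set) = p ^ m"
  shows "CHAR('k) = p"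
proof -
  have CHAR_prime: "Factorial_Ring.prime CHAR('k)"
    by (rule prime_CHAR_semidom) (simp add: finite_imp_CHAR_pos)
  have "CHAR('k) dvd p ^ m" using CHAR_dvd_CARD[where 'a='k] assms(2) by simp
  then have "CHAR('k) dvd p" using CHAR_prime prime_dvd_power by blast
  then show ?thesis using CHAR_prime assms(1) primes_dvd_imp_eq by blast
qed

lemma of_nat_power_pred_CHAR:
  assumes "CHAR('k::field) = p" and "Factorial_Ring.prime p" and "\<not> p dvd i"
  shows "(of_nat i :: 'k) ^ (p - 1) = 1"
proof -
  have "[i ^ (p - 1) = 1] (mod p)" using fermat_theorem assms(2,3) by blast
  then have "(of_nat (i ^ (p - 1)) :: 'k) = of_nat 1"
    unfolding of_nat_eq_iff_cong_CHAR assms(1) .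
  then show ?thesis by simp
qed

lemma of_nat_power_CHAR:
  assumes "CHAR('k::field) = p" and "Factorial_Ring.prime p"
  shows "(of_nat i :: 'k) ^ p = of_nat i"
proof (cases "p dvd i")
  case True
  then have "(of_nat i :: 'k) = 0" using assms(1) by (simp add: of_nat_eq_0_iff_char_dvd)
  then show ?thesis using prime_gt_0_nat[OF assms(2)] by simp
next
  case False
  have "(of_nat i :: 'k) ^ p = of_nat i * of_nat i ^ (p - 1)"
    using prime_gt_0_nat[OF assms(2)] by (simp add: power_eq_if)
  then show ?thesis using of_nat_power_pred_CHAR[OF assms False] by simp
qed

lemma sum_of_nat_power_pred_CHAR:
  assumes "CHAR('k::field) = p" and "Factorial_Ring.prime p"
  shows "(\<Sum>i<p. (of_nat i :: 'k) ^ (p - 1)) = -1"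
proof -
  have p1: "1 < p" using prime_gt_1_nat[OF assms(2)] .
  have "(\<Sum>i<p. (of_nat i :: 'k) ^ (p - 1)) = (\<Sum>i\<in>{1..<p}. 1)"
  proof -
    have "{..<p} = insert 0 {1..<p}" using p1 by auto
    moreover have "(of_nat i :: 'k) ^ (p - 1) = 1" if "i \<in> {1..<p}" for i
      using that by (intro of_nat_power_pred_CHAR[OF assms]) (auto dest: dvd_imp_le)
    ultimately show ?thesis using p1 by simp
  qed
  also have "\<dots> = of_nat p - 1" using p1 by (simp add: of_nat_diff)
  also have "\<dots> = -1" using of_nat_CHAR[where 'a='k] assms(1) by simp
  finally show ?thesis .
qed

lemma ex_of_nat_power_ne_1_CHAR:
  assumes "CHAR('k::field) = p" and "1 \<le> k" and "k < p - 1"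
  shows "\<exists>r. 1 \<le> r \<and> r < p \<and> (of_nat r :: 'k) ^ k \<noteq> 1"
proof (rule ccontr)
  assume "\<not> ?thesis"
  then have roots: "\<And>r. 1 \<le> r \<Longrightarrow> r < p \<Longrightarrow> (of_nat r :: 'k) ^ k = 1" by blast
  define P :: "'k poly" where "P = monom 1 k - 1"
  have deg_P: "degree P \<le> k" unfolding P_def by (intro degree_diff_le) (simp_all add: degree_monom_le)
  have "coeff P k = 1" using assms(2) unfolding P_def by simp
  then have "P \<noteq> 0" by auto
  have "inj_on (of_nat :: nat \<Rightarrow> 'k) {1..<p}"
    by (rule inj_onI) (use assms(1) in \<open>auto simp: of_nat_eq_iff_cong_CHAR cong_def\<close>)
  then have "p - 1 = card (of_nat ` {1..<p} :: 'k set)" by (simp add: card_image)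
  also have "\<dots> \<le> card {x. poly P x = 0}"
    using roots poly_roots_finite[OF \<open>P \<noteq> 0\<close>] by (intro card_mono) (auto simp: P_def poly_monom)
  also have "\<dots> \<le> k" using card_poly_roots_bound[OF \<open>P \<noteq> 0\<close>] deg_P by simp
  finally show False using assms(3) by simp
qed

lemma sum_of_nat_power_CHAR_eq_0:
  assumes "CHAR('k::field) = p" and "Factorial_Ring.prime p" and "1 \<le> k" and "k < p - 1"
  shows "(\<Sum>i<p. (of_nat i :: 'k) ^ k) = 0"
proof -
  obtain r where r: "1 \<le> r" "r < p" "(of_nat r :: 'k) ^ k \<noteq> 1"
    using ex_of_nat_power_ne_1_CHAR[OF assms(1,3,4)] by blast
  have "\<not> p dvd r" using r by (auto dest: dvd_imp_le)
  then have "coprime r p" using prime_imp_coprime[OF assms(2)] coprime_commute by blast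
  define h where "h i = (r * i) mod p" for i
  have "inj_on h {..<p}"
  proof (rule inj_onI)
    fix i j assume ij: "i \<in> {..<p}" "j \<in> {..<p}" "h i = h j"
    then have "[r * i = r * j] (mod p)" by (simp add: h_def cong_def)
    then have "[i = j] (mod p)" using \<open>coprime r p\<close> by (simp add: cong_mult_lcancel_nat)
    then show "i = j" using ij by (simp add: cong_def)
  qed
  moreover have "h ` {..<p} = {..<p}"
    by (rule endo_inj_surj[OF _ _ \<open>inj_on h {..<p}\<close>]) (use assms(2) prime_gt_0_nat in \<open>auto simp: h_def\<close>)
  ultimately have "bij_betw h {..<p} {..<p}" by (simp add: bij_betw_def)
  then have "(\<Sum>i<p. (of_nat i :: 'k) ^ k) = (\<Sum>i<p. (of_nat (h i) :: 'k) ^ k)"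
    using sum.reindex_bij_betw[of h "{..<p}" "{..<p}" "\<lambda>i. (of_nat i :: 'k) ^ k"] by simp
  also have "\<dots> = (of_nat r) ^ k * (\<Sum>i<p. (of_nat i :: 'k) ^ k)"
  proof -
    have "(of_nat (x mod p) :: 'k) = of_nat x" for x
      using assms(1) by (simp add: of_nat_eq_iff_cong_CHAR cong_def)
    then show ?thesis by (simp add: h_def power_mult_distrib sum_distrib_left)
  qed
  finally have "((of_nat r) ^ k - 1) * (\<Sum>i<p. (of_nat i :: 'k) ^ k) = 0"
    by (simp add: algebra_simps)
  then show ?thesis using r(3) by simp
qed

lemma sum_of_nat_power_CHAR:
  assumes "CHAR('k::field) = p" and "Factorial_Ring.prime p" and "odd p" and "d \<le> p"
  shows "(\<Sum>i<p. (of_nat i :: 'k) ^ d) = (if d = p - 1 then -1 else 0)"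
proof -
  have p3: "3 \<le> p" using odd_prime_ge_3 assms(2,3) .
  have p_zero: "(of_nat p :: 'k) = 0" using of_nat_CHAR[where 'a='k] assms(1) by simp
  consider "d = 0" | "1 \<le> d \<and> d < p - 1" | "d = p - 1" | "d = p" using assms(4) by linarith
  then show ?thesis
  proof cases
    case 1
    then show ?thesis using p3 p_zero by simp
  next
    case 2
    then show ?thesis using sum_of_nat_power_CHAR_eq_0[OF assms(1,2)] by auto
  next
    case 3
    then show ?thesis using sum_of_nat_power_pred_CHAR[OF assms(1,2)] by simp
  next
    case 4
    then have "(\<Sum>i<p. (of_nat i :: 'k) ^ d) = (\<Sum>i<p. (of_nat i :: 'k) ^ 1)"
      by (simp add: of_nat_power_CHAR[OF assms(1,2)])
    also have "\<dots> = 0" using sum_of_nat_power_CHAR_eq_0[OF assms(1,2), of 1] p3 by simp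
    finally show ?thesis using 4 p3 by simp
  qed
qed

lemma ex_power_ne_self:
  assumes "2 \<le> n" and "n < card (UNIV :: 'k::{field,finite} set)"
  shows "\<exists>c::'k. c ^ n \<noteq> c"
proof (rule ccontr)
  assume "\<nexists>c::'k. c ^ n \<noteq> c"
  define P :: "'k poly" where "P = monom 1 n - [:0, 1:]"
  have "coeff P n = 1" using assms(1) unfolding P_def by (simp add: coeff_pCons split: nat.split)
  then have "P \<noteq> 0" by auto
  have "degree P \<le> n" unfolding P_def using assms(1)
    by (intro degree_diff_le) (simp_all add: degree_monom_le)
  moreover have "{x. poly P x = 0} = UNIV" using \<open>\<nexists>c. c ^ n \<noteq> c\<close> by (auto simp: P_def poly_monom)
  ultimately have "card (UNIV :: 'k set) \<le> n" using card_poly_roots_bound[OF \<open>P \<noteq> 0\<close>] by simp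
  then show False using assms(2) by simp
qed

section \<open>Homogeneous polynomials and the substitution y \<mapsto> y - t x\<close>

(* hmonom n i = x^(n-i) y^i, hcoeff n j w is the coefficient of x^(n-j) y^j in w,
   and y_shift t = y - t x. *)
definition hmonom :: "nat \<Rightarrow> nat \<Rightarrow> 'k::field poly poly" where
  "hmonom n i = monom (monom 1 (n - i)) i"

definition hcoeff :: "nat \<Rightarrow> nat \<Rightarrow> 'k::field poly poly \<Rightarrow> 'k" where
  "hcoeff n j w = coeff (coeff w j) (n - j)"

definition y_shift :: "'k::field \<Rightarrow> 'k poly poly" where
  "y_shift t = [:[:0, -t:], 1:]"

lemma poly_map_const_bX: "poly (map_poly (\<lambda>k. [:[:k:]:]) c) (bX :: 'k::comm_ring_1 poly poly) = [:c:]"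
  by (induction c) (simp_all add: map_poly_pCons bX_def)

lemma hact_inv_umat:
  fixes t :: "'k::field"
  shows "hact w (mat2_inv (umat t)) = pcompose w (y_shift t)"
proof -
  have "mat2_inv (umat t) = (1, 0, -t, 1)" by (simp add: mat2_inv_def umat_def)
  moreover have "[:[:1:]:] * bX + [:[:0:]:] * bY = (bX :: 'k poly poly)"
    by (simp add: one_pCons[symmetric])
  moreover have "[:[:-t:]:] * bX + [:[:1:]:] * bY = y_shift t"
    by (simp add: y_shift_def bX_def bY_def)
  ultimately show ?thesis
    by (simp add: hact_def bsubst_def pcompose_altdef poly_map_const_bX)
qed

lemma homog_eq_sum_monom:
  assumes "homog n w"
  shows "w = (\<Sum>j\<le>n. monom (monom (hcoeff n j w) (n - j)) j)"
proof (intro poly_eqI)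
  fix a b
  have "coeff (coeff w a) b = (if a \<le> n \<and> b = n - a then hcoeff n a w else 0)"
  proof (cases "coeff (coeff w a) b = 0")
    case False
    then have "b + a = n" using assms by (auto simp: homog_def)
    then show ?thesis by (auto simp: hcoeff_def)
  qed (auto simp: hcoeff_def)
  moreover have "coeff (\<Sum>j\<le>n. monom (monom (hcoeff n j w) (n - j)) j) a
      = (if a \<le> n then monom (hcoeff n a w) (n - a) else 0)"
    by (simp add: coeff_sum coeff_monom sum.delta)
  ultimately show "coeff (coeff w a) b = coeff (coeff (\<Sum>j\<le>n. monom (monom (hcoeff n j w) (n - j)) j) a) b"
    by (simp add: coeff_monom)
qed

lemma pcompose_power: "pcompose (p ^ j) q = (pcompose p q) ^ j"
  by (induction j) (simp_all add: pcompose_mult pcompose_1)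

lemma pcompose_monom: "pcompose (monom c j) q = smult c (q ^ j)"
  by (simp add: monom_altdef pcompose_smult pcompose_power pcompose_pCons)

lemma smult_sum_right: "smult a (sum f A) = (\<Sum>i\<in>A. smult a (f i))"
  by (induction A rule: infinite_finite_induct) (simp_all add: smult_add_right)

lemma pcompose_monom_y_shift:
  "pcompose (monom (monom (a::'k::field) k) j) (y_shift t)
     = (\<Sum>i\<le>j. monom (monom (a * of_nat (j choose i) * (-t) ^ (j - i)) (k + (j - i))) i)"
proof -
  have const_power: "[:[:0, -t:]:] ^ r = [:monom ((-t) ^ r) r:]" for r
  proof -
    have "[:0, -t:] = monom (-t) 1" by (simp add: monom_Suc monom_0)
    then show ?thesis by (simp add: poly_const_pow monom_power)
  qed
  have binomial_term: "smult (monom a k) (of_nat c * [:0, 1:] ^ i * [:[:0, -t:]:] ^ r)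
      = monom (monom (a * of_nat c * (-t) ^ r) (k + r)) i" for c i r
  proof -
    have "of_nat c * [:0, 1:] ^ i * [:[:0, -t:]:] ^ r = smult (of_nat c * monom ((-t) ^ r) r) ([:0, 1::'k poly:] ^ i)"
      by (simp add: const_power of_nat_poly[where 'a="'k poly"] mult.commute[of _ "[:_:]"] mult.assoc)
         (simp add: mult.commute)
    then show ?thesis
      by (simp add: smult_smult monom_altdef[symmetric] of_nat_poly mult_monom smult_monom mult_ac)
  qed
  have "y_shift t = [:0, 1:] + [:[:0, -t:]:]" by (simp add: y_shift_def)
  then have "pcompose (monom (monom a k) j) (y_shift t)
      = smult (monom a k) (\<Sum>i\<le>j. of_nat (j choose i) * [:0, 1:] ^ i * [:[:0, -t:]:] ^ (j - i))"
    by (simp only: pcompose_monom binomial_ring)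
  then show ?thesis by (simp add: smult_sum_right binomial_term)
qed

lemma pcompose_y_shift:
  assumes "homog n w"
  shows "pcompose w (y_shift t) = (\<Sum>j\<le>n. \<Sum>i\<le>j.
           monom (monom (hcoeff n j w * of_nat (j choose i) * (-t) ^ (j - i)) (n - i)) i)"
proof -
  have "pcompose w (y_shift t) = (\<Sum>j\<le>n. pcompose (monom (monom (hcoeff n j w) (n - j)) j) (y_shift t))"
    by (subst homog_eq_sum_monom[OF assms]) (simp add: pcompose_sum)
  also have "\<dots> = (\<Sum>j\<le>n. \<Sum>i\<le>j.
           monom (monom (hcoeff n j w * of_nat (j choose i) * (-t) ^ (j - i)) (n - i)) i)"
    by (auto simp: pcompose_monom_y_shift intro!: sum.cong)
  finally show ?thesis .
qed

lemma y_shift_0: "y_shift 0 = [:0, 1:]"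
  by (simp add: y_shift_def)

lemma pcompose_y_shift_y_shift: "pcompose (y_shift s) (y_shift t) = y_shift (s + t)"
  by (simp add: y_shift_def pcompose_pCons)

lemma homog_0: "homog n 0"
  by (simp add: homog_def)

lemma homog_add: "homog n f \<Longrightarrow> homog n g \<Longrightarrow> homog n (f + g)"
  by (auto simp: homog_def) (metis add_0 add.right_neutral)

lemma homog_sum: "(\<And>i. i \<in> A \<Longrightarrow> homog n (g i)) \<Longrightarrow> homog n (sum g A)"
  by (induction A rule: infinite_finite_induct) (simp_all add: homog_0 homog_add)

lemma homog_smult: "homog n f \<Longrightarrow> homog n (smult [:a:] f)"
  by (auto simp: homog_def) (metis mult_zero_right)

lemma homog_monom: "i \<le> n \<Longrightarrow> homog n (monom (monom a (n - i)) i)"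
  by (simp add: homog_def coeff_monom)

lemma homog_pcompose_y_shift: "homog n w \<Longrightarrow> homog n (pcompose w (y_shift t))"
  by (auto simp: pcompose_y_shift intro!: homog_sum homog_monom)

lemma Vhom_add: "f \<in> Vhom n \<Longrightarrow> g \<in> Vhom n \<Longrightarrow> f + g \<in> Vhom n"
  by (simp add: Vhom_def homog_add)

lemma Vhom_smult: "f \<in> Vhom n \<Longrightarrow> smult [:a:] f \<in> Vhom n"
  by (simp add: Vhom_def homog_smult)

lemma Vhom_sum: "(\<And>i. i \<in> A \<Longrightarrow> g i \<in> Vhom n) \<Longrightarrow> sum g A \<in> Vhom n"
  by (simp add: Vhom_def homog_sum)

lemma Vhom_monom: "i \<le> n \<Longrightarrow> monom (monom a (n - i)) i \<in> Vhom n"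
  by (simp add: Vhom_def homog_monom)

lemma Vhom_pcompose_y_shift: "w \<in> Vhom n \<Longrightarrow> pcompose w (y_shift t) \<in> Vhom n"
  by (simp add: Vhom_def homog_pcompose_y_shift)

lemma hmonom_Vhom: "i \<le> n \<Longrightarrow> hmonom n i \<in> Vhom n"
  by (simp add: hmonom_def Vhom_def homog_monom)

lemma hcoeff_hmonom: "i \<le> n \<Longrightarrow> j \<le> n \<Longrightarrow> hcoeff n j (hmonom n i) = (if j = i then 1 else 0)"
  by (auto simp: hcoeff_def hmonom_def coeff_monom)

section \<open>The dual module \<Lambda> and the action of U\<close>

definition uact :: "nat \<Rightarrow> 'k::field \<Rightarrow> ('k poly poly \<Rightarrow> 'k) \<Rightarrow> ('k poly poly \<Rightarrow> 'k)" where
  "uact n t \<eta> = dact n \<eta> (umat t)"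

definition hdual :: "nat \<Rightarrow> nat \<Rightarrow> ('k::field poly poly \<Rightarrow> 'k)" where
  "hdual n k = (\<lambda>w. if w \<in> Vhom n then hcoeff n k w else 0)"

lemma sum_apply: "(sum f A) x = (\<Sum>a\<in>A. f a x)"
  by (induction A rule: infinite_finite_induct) auto

lemma uact_apply: "uact n t \<eta> w = (if w \<in> Vhom n then \<eta> (pcompose w (y_shift t)) else 0)"
  by (simp add: uact_def dact_def hact_inv_umat)

lemma LambdaI:
  assumes "\<And>f g. f \<in> Vhom n \<Longrightarrow> g \<in> Vhom n \<Longrightarrow> \<eta> (f + g) = \<eta> f + \<eta> g"
    and "\<And>a f. f \<in> Vhom n \<Longrightarrow> \<eta> (smult [:a:] f) = a * \<eta> f"
    and "\<And>f. f \<notin> Vhom n \<Longrightarrow> \<eta> f = 0"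
  shows "\<eta> \<in> Lambda n"
  using assms by (simp add: Lambda_def)

lemma Lambda_outside: "\<eta> \<in> Lambda n \<Longrightarrow> w \<notin> Vhom n \<Longrightarrow> \<eta> w = 0"
  by (simp add: Lambda_def)

lemma Lambda_additive: "\<eta> \<in> Lambda n \<Longrightarrow> f \<in> Vhom n \<Longrightarrow> g \<in> Vhom n \<Longrightarrow> \<eta> (f + g) = \<eta> f + \<eta> g"
  by (simp add: Lambda_def)

lemma Lambda_smult: "\<eta> \<in> Lambda n \<Longrightarrow> f \<in> Vhom n \<Longrightarrow> \<eta> (smult [:a:] f) = a * \<eta> f"
  by (simp add: Lambda_def)

lemma Lambda_apply_sum:
  assumes "\<eta> \<in> Lambda n" and "\<And>i. i \<in> A \<Longrightarrow> g i \<in> Vhom n"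
  shows "\<eta> (sum g A) = (\<Sum>i\<in>A. \<eta> (g i))"
  using assms(2)
proof (induction A rule: infinite_finite_induct)
  case (insert x F)
  then show ?case by (simp add: Lambda_additive[OF assms(1)] Vhom_sum)
qed (use Lambda_smult[OF assms(1), of 0 0] Vhom_def homog_0 in auto)

lemma Lambda_apply_monom:
  assumes "\<eta> \<in> Lambda n" and "i \<le> n"
  shows "\<eta> (monom (monom a (n - i)) i) = a * \<eta> (hmonom n i)"
proof -
  have "monom (monom a (n - i)) i = smult [:a:] (hmonom n i)"
    by (simp add: hmonom_def smult_monom)
  then show ?thesis using assms by (simp add: Lambda_smult hmonom_Vhom)
qed

lemma Lambda_apply_eq_sum:
  assumes "\<eta> \<in> Lambda n" and "w \<in> Vhom n"
  shows "\<eta> w = (\<Sum>j\<le>n. hcoeff n j w * \<eta> (hmonom n j))"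
proof -
  have "\<eta> w = \<eta> (\<Sum>j\<le>n. monom (monom (hcoeff n j w) (n - j)) j)"
    using homog_eq_sum_monom assms(2) by (metis Vhom_def mem_Collect_eq)
  also have "\<dots> = (\<Sum>j\<le>n. \<eta> (monom (monom (hcoeff n j w) (n - j)) j))"
    by (rule Lambda_apply_sum[OF assms(1)]) (simp add: Vhom_monom)
  also have "\<dots> = (\<Sum>j\<le>n. hcoeff n j w * \<eta> (hmonom n j))"
    using assms(1) by (simp add: Lambda_apply_monom)
  finally show ?thesis .
qed

lemma Lambda_eqI:
  assumes "\<eta> \<in> Lambda n" and "\<xi> \<in> Lambda n" and "\<And>i. i \<le> n \<Longrightarrow> \<eta> (hmonom n i) = \<xi> (hmonom n i)"
  shows "\<eta> = \<xi>"
proof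
  fix w
  show "\<eta> w = \<xi> w"
    using assms by (cases "w \<in> Vhom n") (simp_all add: Lambda_apply_eq_sum Lambda_outside)
qed

lemma Lambda_add: "\<eta> \<in> Lambda n \<Longrightarrow> \<xi> \<in> Lambda n \<Longrightarrow> \<eta> + \<xi> \<in> Lambda n"
  by (rule LambdaI) (simp_all add: Lambda_additive Lambda_smult Lambda_outside algebra_simps)

lemma Lambda_uminus: "\<eta> \<in> Lambda n \<Longrightarrow> - \<eta> \<in> Lambda n"
  by (rule LambdaI) (simp_all add: Lambda_additive Lambda_smult Lambda_outside algebra_simps)

lemma Lambda_diff: "\<eta> \<in> Lambda n \<Longrightarrow> \<xi> \<in> Lambda n \<Longrightarrow> \<eta> - \<xi> \<in> Lambda n"
  by (rule LambdaI) (simp_all add: Lambda_additive Lambda_smult Lambda_outside algebra_simps)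

lemma Lambda_zero: "(0 :: 'k::field poly poly \<Rightarrow> 'k) \<in> Lambda n"
  by (rule LambdaI) simp_all

lemma Lambda_scale: "\<eta> \<in> Lambda n \<Longrightarrow> (\<lambda>w. a * \<eta> w) \<in> Lambda n"
  by (rule LambdaI) (simp_all add: Lambda_additive Lambda_smult Lambda_outside algebra_simps)

lemma Lambda_sum: "(\<And>i. i \<in> A \<Longrightarrow> g i \<in> Lambda n) \<Longrightarrow> sum g A \<in> Lambda n"
  by (induction A rule: infinite_finite_induct) (simp_all add: Lambda_zero Lambda_add)

lemma hdual_Lambda: "hdual n k \<in> Lambda n"
  by (rule LambdaI) (simp_all add: hdual_def Vhom_add Vhom_smult hcoeff_def)

lemma hdual_hmonom: "i \<le> n \<Longrightarrow> k \<le> n \<Longrightarrow> hdual n k (hmonom n i) = (if k = i then 1 else 0)"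
  by (simp add: hdual_def hmonom_Vhom hcoeff_hmonom)

lemma sum_hdual_hmonom:
  assumes "J \<subseteq> {..n}" and "i \<le> n"
  shows "(\<Sum>k\<in>J. (\<lambda>w. a k * hdual n k w)) (hmonom n i) = (if i \<in> J then a i else 0)"
proof -
  have "finite J" using assms(1) finite_subset by blast
  have "(\<Sum>k\<in>J. (\<lambda>w. a k * hdual n k w)) (hmonom n i) = (\<Sum>k\<in>J. if k = i then a k else 0)"
    unfolding sum_apply using assms by (intro sum.cong refl) (auto simp: hdual_hmonom)
  then show ?thesis using \<open>finite J\<close> by (simp add: sum.delta')
qed

lemma card_Lambda_vanishing:
  assumes I: "I \<subseteq> {..n}"
  shows "card {\<eta> \<in> (Lambda n :: ('k::{field,finite} poly poly \<Rightarrow> 'k) set). \<forall>i\<in>{..n} - I. \<eta> (hmonom n i) = 0}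
           = card (UNIV :: 'k set) ^ card I"
proof -
  let ?W = "{\<eta> \<in> (Lambda n :: ('k poly poly \<Rightarrow> 'k) set). \<forall>i\<in>{..n} - I. \<eta> (hmonom n i) = 0}"
  define coords :: "('k poly poly \<Rightarrow> 'k) \<Rightarrow> nat \<Rightarrow> 'k" where
    "coords \<eta> = restrict (\<lambda>i. \<eta> (hmonom n i)) I" for \<eta>
  have "inj_on coords ?W"
  proof (rule inj_onI)
    fix \<eta> \<xi> assume \<eta>: "\<eta> \<in> ?W" and \<xi>: "\<xi> \<in> ?W" and eq: "coords \<eta> = coords \<xi>"
    have "\<eta> (hmonom n i) = \<xi> (hmonom n i)" if "i \<le> n" for i
    proof (cases "i \<in> I")
      case True
      then show ?thesis using fun_cong[OF eq, of i] by (simp add: coords_def)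
    qed (use \<eta> \<xi> that in auto)
    then show "\<eta> = \<xi>" using \<eta> \<xi> by (intro Lambda_eqI) auto
  qed
  moreover have "coords ` ?W = PiE I (\<lambda>_. UNIV)"
  proof
    show "coords ` ?W \<subseteq> PiE I (\<lambda>_. UNIV)" by (auto simp: coords_def)
    show "PiE I (\<lambda>_. UNIV) \<subseteq> coords ` ?W"
    proof
      fix a assume a: "a \<in> PiE I (\<lambda>_. (UNIV :: 'k set))"
      define \<eta> where "\<eta> = (\<Sum>k\<in>I. (\<lambda>w. a k * hdual n k w))"
      have coords_\<eta>: "\<eta> (hmonom n i) = (if i \<in> I then a i else 0)" if "i \<le> n" for i
        unfolding \<eta>_def using sum_hdual_hmonom[OF I that] .
      have "\<eta> \<in> ?W" using coords_\<eta> unfolding \<eta>_def by (auto intro!: Lambda_sum Lambda_scale hdual_Lambda)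
      moreover have "coords \<eta> = a"
      proof
        fix i
        show "coords \<eta> i = a i"
          using a I coords_\<eta>[of i] by (cases "i \<in> I") (auto simp: coords_def PiE_def extensional_def)
      qed
      ultimately show "a \<in> coords ` ?W" by blast
    qed
  qed
  ultimately have "card ?W = card (PiE I (\<lambda>_. (UNIV :: 'k set)))"
    using card_image by fastforce
  also have "\<dots> = card (UNIV :: 'k set) ^ card I" using finite_subset[OF I] by (simp add: card_PiE)
  finally show ?thesis .
qed

lemma card_Lambda: "card (Lambda n :: ('k::{field,finite} poly poly \<Rightarrow> 'k) set) = card (UNIV :: 'k set) ^ (n + 1)"
  using card_Lambda_vanishing[of "{..n}" n] by simp

lemma card_Lambda_vanishing_x_power:
  "card {\<eta> \<in> (Lambda n :: ('k::{field,finite} poly poly \<Rightarrow> 'k) set). \<eta> (hmonom n 0) = 0}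
     = card (UNIV :: 'k set) ^ n"
proof -
  have "{..n} - {1..n} = {0}" by auto
  then show ?thesis using card_Lambda_vanishing[of "{1..n}" n] by simp
qed

lemma uact_Lambda: "\<eta> \<in> Lambda n \<Longrightarrow> uact n t \<eta> \<in> Lambda n"
  by (rule LambdaI)
     (simp_all add: uact_apply Vhom_add Vhom_smult Vhom_pcompose_y_shift pcompose_add pcompose_smult
       Lambda_additive Lambda_smult)

lemma uact_0: "\<eta> \<in> Lambda n \<Longrightarrow> uact n 0 \<eta> = \<eta>"
  by (rule ext) (simp add: uact_apply y_shift_0 pcompose_idR Lambda_outside)

lemma uact_uact: "\<eta> \<in> Lambda n \<Longrightarrow> uact n s (uact n t \<eta>) = uact n (s + t) \<eta>"
  by (rule ext) (simp add: uact_apply Vhom_pcompose_y_shift pcompose_assoc[symmetric] pcompose_y_shift_y_shift)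

lemma uact_add: "uact n t (\<eta> + \<xi>) = uact n t \<eta> + uact n t \<xi>"
  by (rule ext) (simp add: uact_apply)

lemma uact_uminus: "uact n t (- \<eta>) = - uact n t \<eta>"
  by (rule ext) (simp add: uact_apply)

lemma uact_diff: "uact n t (\<eta> - \<xi>) = uact n t \<eta> - uact n t \<xi>"
  by (rule ext) (simp add: uact_apply)

lemma uact_zero: "uact n t 0 = 0"
  by (rule ext) (simp add: uact_apply)

lemma uact_scale: "uact n t (\<lambda>w. a * \<eta> w) = (\<lambda>w. a * uact n t \<eta> w)"
  by (rule ext) (simp add: uact_apply)

lemma uact_sum: "uact n t (sum g A) = (\<Sum>i\<in>A. uact n t (g i))"
  by (rule ext) (simp add: uact_apply sum_apply)

lemma uact_hmonom:
  assumes "\<eta> \<in> Lambda n" and "j \<le> n"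
  shows "uact n t \<eta> (hmonom n j) = (\<Sum>i\<le>j. of_nat (j choose i) * (-t) ^ (j - i) * \<eta> (hmonom n i))"
proof -
  have "pcompose (hmonom n j) (y_shift t)
      = (\<Sum>i\<le>j. monom (monom (of_nat (j choose i) * (-t) ^ (j - i)) (n - i)) i)"
    using assms(2) by (auto simp: hmonom_def pcompose_monom_y_shift intro!: sum.cong)
  then have "uact n t \<eta> (hmonom n j)
      = \<eta> (\<Sum>i\<le>j. monom (monom (of_nat (j choose i) * (-t) ^ (j - i)) (n - i)) i)"
    using assms(2) by (simp add: uact_apply hmonom_Vhom)
  also have "\<dots> = (\<Sum>i\<le>j. \<eta> (monom (monom (of_nat (j choose i) * (-t) ^ (j - i)) (n - i)) i))"
    using assms(2) by (intro Lambda_apply_sum[OF assms(1)]) (simp add: Vhom_monom)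
  also have "\<dots> = (\<Sum>i\<le>j. of_nat (j choose i) * (-t) ^ (j - i) * \<eta> (hmonom n i))"
    using assms by (intro sum.cong refl) (simp add: Lambda_apply_monom)
  finally show ?thesis .
qed

lemma uact_hmonom_0: "\<eta> \<in> Lambda n \<Longrightarrow> uact n t \<eta> (hmonom n 0) = \<eta> (hmonom n 0)"
  by (simp add: uact_hmonom)

lemma uact_hdual_hmonom:
  assumes "j \<le> n" and "k \<le> n"
  shows "uact n t (hdual n k) (hmonom n j) = (if k \<le> j then of_nat (j choose k) * (-t) ^ (j - k) else 0)"
proof -
  have "uact n t (hdual n k) (hmonom n j)
      = (\<Sum>i\<le>j. of_nat (j choose i) * (-t) ^ (j - i) * hdual n k (hmonom n i))"
    using assms by (simp add: uact_hmonom hdual_Lambda)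
  also have "\<dots> = (\<Sum>i\<le>j. if i = k then of_nat (j choose i) * (-t) ^ (j - i) else 0)"
    using assms by (intro sum.cong refl) (auto simp: hdual_hmonom)
  finally show ?thesis by (simp add: sum.delta')
qed

section \<open>The group S_\<Lambda>(q) and its p-th powers\<close>

lemma S_Lambda_carrier: "carrier (S_Lambda n :: ('k::{field,finite} \<times> _) monoid) = UNIV \<times> Lambda n"
  by (simp add: S_Lambda_def)

lemma S_Lambda_one: "\<one>\<^bsub>S_Lambda n :: ('k::{field,finite} \<times> _) monoid\<^esub> = (0, 0)"
  by (simp add: S_Lambda_def zero_fun_def)

lemma S_Lambda_mult:
  "(c1, \<eta>1) \<otimes>\<^bsub>S_Lambda n :: ('k::{field,finite} \<times> _) monoid\<^esub> (c2, \<eta>2) = (c1 + c2, uact n c2 \<eta>1 + \<eta>2)"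
  by (simp add: S_Lambda_def uact_def plus_fun_def)

lemma group_S_Lambda: "group (S_Lambda n :: ('k::{field,finite} \<times> _) monoid)"
proof (rule groupI)
  fix x y z :: "'k \<times> ('k poly poly \<Rightarrow> 'k)"
  assume x: "x \<in> carrier (S_Lambda n)" and y: "y \<in> carrier (S_Lambda n)"
  then show "x \<otimes>\<^bsub>S_Lambda n\<^esub> y \<in> carrier (S_Lambda n)"
    by (cases x; cases y) (simp add: S_Lambda_mult S_Lambda_carrier Lambda_add uact_Lambda)
  assume z: "z \<in> carrier (S_Lambda n)"
  show "x \<otimes>\<^bsub>S_Lambda n\<^esub> y \<otimes>\<^bsub>S_Lambda n\<^esub> z = x \<otimes>\<^bsub>S_Lambda n\<^esub> (y \<otimes>\<^bsub>S_Lambda n\<^esub> z)"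
    using x y z by (cases x; cases y; cases z) (simp add: S_Lambda_mult S_Lambda_carrier uact_add uact_uact add_ac)
next
  show "\<one>\<^bsub>S_Lambda n\<^esub> \<in> carrier (S_Lambda n :: ('k \<times> _) monoid)"
    by (simp add: S_Lambda_one S_Lambda_carrier Lambda_zero)
next
  fix x :: "'k \<times> ('k poly poly \<Rightarrow> 'k)"
  assume x: "x \<in> carrier (S_Lambda n)"
  then show "\<one>\<^bsub>S_Lambda n\<^esub> \<otimes>\<^bsub>S_Lambda n\<^esub> x = x"
    by (cases x) (simp add: S_Lambda_one S_Lambda_mult uact_zero)
  obtain c \<eta> where x_eq: "x = (c, \<eta>)" and \<eta>: "\<eta> \<in> Lambda n"
    using x by (cases x) (simp add: S_Lambda_carrier)
  have "(-c, - uact n (-c) \<eta>) \<otimes>\<^bsub>S_Lambda n\<^esub> x = \<one>\<^bsub>S_Lambda n\<^esub>"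
    using \<eta> by (simp add: x_eq S_Lambda_mult S_Lambda_one uact_uminus uact_uact uact_0)
  moreover have "(-c, - uact n (-c) \<eta>) \<in> carrier (S_Lambda n)"
    using \<eta> by (simp add: S_Lambda_carrier Lambda_uminus uact_Lambda)
  ultimately show "\<exists>y\<in>carrier (S_Lambda n). y \<otimes>\<^bsub>S_Lambda n\<^esub> x = \<one>\<^bsub>S_Lambda n\<^esub>" by blast
qed

lemma S_Lambda_inv:
  "\<eta> \<in> Lambda n \<Longrightarrow> inv\<^bsub>S_Lambda n :: ('k::{field,finite} \<times> _) monoid\<^esub> (c, \<eta>) = (-c, - uact n (-c) \<eta>)"
  by (rule group.inv_equality[OF group_S_Lambda])
     (simp_all add: S_Lambda_mult S_Lambda_one S_Lambda_carrier uact_uminus uact_uact uact_0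
       Lambda_uminus uact_Lambda)

lemma S_Lambda_pow:
  "\<eta> \<in> Lambda n \<Longrightarrow> (c, \<eta>) [^]\<^bsub>S_Lambda n :: ('k::{field,finite} \<times> _) monoid\<^esub> (k::nat)
     = (of_nat k * c, \<Sum>i<k. uact n (of_nat i * c) \<eta>)"
proof (induction k)
  case 0
  then show ?case by (simp add: S_Lambda_one zero_fun_def)
next
  case (Suc k)
  have "(\<Sum>i<Suc k. uact n (of_nat i * c) \<eta>) = uact n 0 \<eta> + (\<Sum>i<k. uact n (of_nat (Suc i) * c) \<eta>)"
    by (subst sum.lessThan_Suc_shift) simp
  also have "\<dots> = (\<Sum>i<k. uact n c (uact n (of_nat i * c) \<eta>)) + \<eta>"
    using Suc.prems by (simp add: uact_uact uact_0 algebra_simps)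
  finally show ?case
    using Suc by (simp add: S_Lambda_mult uact_sum algebra_simps) (simp add: plus_fun_def)
qed

lemma sum_uact_multiples_hmonom:
  assumes "\<eta> \<in> Lambda n" and "j \<le> n"
  shows "(\<Sum>r<p. uact n (of_nat r * c) \<eta>) (hmonom n j)
           = (\<Sum>i\<le>j. of_nat (j choose i) * (-c) ^ (j - i) * \<eta> (hmonom n i)
                        * (\<Sum>r<p. (of_nat r :: 'k::{field,finite}) ^ (j - i)))"
proof -
  have "(\<Sum>r<p. uact n (of_nat r * c) \<eta>) (hmonom n j)
      = (\<Sum>r<p. \<Sum>i\<le>j. of_nat (j choose i) * (-(of_nat r * c)) ^ (j - i) * \<eta> (hmonom n i))"
    using assms by (simp add: sum_apply uact_hmonom)
  also have "\<dots> = (\<Sum>i\<le>j. \<Sum>r<p. of_nat (j choose i) * (-c) ^ (j - i) * \<eta> (hmonom n i)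
                                 * (of_nat r :: 'k) ^ (j - i))"
  proof -
    have "(-(of_nat r * c)) ^ e = (-c) ^ e * (of_nat r :: 'k) ^ e" for r e
      by (metis mult.commute mult_minus_left power_mult_distrib)
    then show ?thesis by (subst sum.swap) (simp add: mult_ac)
  qed
  finally show ?thesis by (simp add: sum_distrib_left)
qed

lemma sum_uact_multiples:
  fixes c :: "'k::{field,finite}"
  assumes CHAR: "CHAR('k) = p" and prime: "Factorial_Ring.prime p" and "odd p"
    and \<eta>: "\<eta> \<in> Lambda p"
  shows "(\<Sum>r<p. uact p (of_nat r * c) \<eta>)
           = (\<lambda>w. - (c ^ (p - 1) * \<eta> (hmonom p 0)) * hdual p (p - 1) w)"
proof (rule Lambda_eqI)
  show "(\<Sum>r<p. uact p (of_nat r * c) \<eta>) \<in> Lambda p"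
    by (intro Lambda_sum uact_Lambda \<eta>)
  show "(\<lambda>w. - (c ^ (p - 1) * \<eta> (hmonom p 0)) * hdual p (p - 1) w) \<in> Lambda p"
    by (intro Lambda_scale hdual_Lambda)
  fix j assume j: "j \<le> p"
  have p3: "3 \<le> p" using odd_prime_ge_3 prime \<open>odd p\<close> .
  define F where "F i = of_nat (j choose i) * (-c) ^ (j - i) * \<eta> (hmonom p i)" for i
  have "(\<Sum>r<p. uact p (of_nat r * c) \<eta>) (hmonom p j)
      = (\<Sum>i\<le>j. F i * (if j - i = p - 1 then -1 else 0))"
    using j by (simp add: sum_uact_multiples_hmonom[OF \<eta> j] F_def
        sum_of_nat_power_CHAR[OF CHAR prime \<open>odd p\<close>])
  also have "\<dots> = - (c ^ (p - 1) * \<eta> (hmonom p 0)) * hdual p (p - 1) (hmonom p j)"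
  proof -
    \<comment> \<open>only i = j - (p - 1) contributes; for j = p that is i = 1, where (p choose 1) = 0\<close>
    consider "j < p - 1" | "j = p - 1" | "j = p" using j by linarith
    then show ?thesis
    proof cases
      case 1
      then have "(\<Sum>i\<le>j. F i * (if j - i = p - 1 then -1 else 0)) = 0" by (intro sum.neutral) auto
      then show ?thesis using 1 j by (simp add: hdual_hmonom)
    next
      case 2
      then have "(\<Sum>i\<le>j. F i * (if j - i = p - 1 then -1 else 0)) = (\<Sum>i\<le>j. if i = 0 then - F i else 0)"
        by (intro sum.cong refl) auto
      then show ?thesis using 2 p3 \<open>odd p\<close> by (simp add: F_def hdual_hmonom)
    next
      case 3
      then have "(\<Sum>i\<le>j. F i * (if j - i = p - 1 then -1 else 0)) = (\<Sum>i\<le>j. if i = 1 then - F i else 0)"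
        using p3 by (intro sum.cong refl) auto
      then show ?thesis using 3 p3 of_nat_CHAR[where 'a='k] CHAR by (simp add: F_def hdual_hmonom)
    qed
  qed
  finally show "(\<Sum>r<p. uact p (of_nat r * c) \<eta>) (hmonom p j)
      = (\<lambda>w. - (c ^ (p - 1) * \<eta> (hmonom p 0)) * hdual p (p - 1) w) (hmonom p j)"
    by simp
qed

lemma S_Lambda_pow_p:
  fixes c :: "'k::{field,finite}"
  assumes "CHAR('k) = p" and "Factorial_Ring.prime p" and "odd p" and "\<eta> \<in> Lambda p"
  shows "(c, \<eta>) [^]\<^bsub>S_Lambda p :: ('k \<times> _) monoid\<^esub> p
           = (0, (\<lambda>w. - (c ^ (p - 1) * \<eta> (hmonom p 0)) * hdual p (p - 1) w))"
  using assms of_nat_CHAR[where 'a='k] by (simp add: S_Lambda_pow sum_uact_multiples)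

lemma S_Lambda_pow_p_eq_one_iff:
  fixes c :: "'k::{field,finite}"
  assumes "CHAR('k) = p" and prime: "Factorial_Ring.prime p" and "odd p" and "\<eta> \<in> Lambda p"
  shows "(c, \<eta>) [^]\<^bsub>S_Lambda p :: ('k \<times> _) monoid\<^esub> p = \<one>\<^bsub>S_Lambda p :: ('k \<times> _) monoid\<^esub>
           \<longleftrightarrow> c = 0 \<or> \<eta> (hmonom p 0) = 0"
proof -
  have "p - 1 \<noteq> 0" using prime_gt_1_nat[OF prime] by simp
  have "(\<lambda>w. - (c ^ (p - 1) * \<eta> (hmonom p 0)) * hdual p (p - 1) w) = 0
          \<longleftrightarrow> c ^ (p - 1) * \<eta> (hmonom p 0) = 0"
  proof
    assume "(\<lambda>w. - (c ^ (p - 1) * \<eta> (hmonom p 0)) * hdual p (p - 1) w) = 0"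
    from fun_cong[OF this, of "hmonom p (p - 1)"]
    show "c ^ (p - 1) * \<eta> (hmonom p 0) = 0" by (simp add: hdual_hmonom)
  qed (simp add: fun_eq_iff)
  then show ?thesis
    using \<open>p - 1 \<noteq> 0\<close> by (simp add: S_Lambda_pow_p[OF assms] S_Lambda_one)
qed

section \<open>The normal subgroups V and M\<close>

definition M_sub :: "nat \<Rightarrow> ('k::{field,finite} \<times> ('k poly poly \<Rightarrow> 'k)) set" where
  "M_sub n = UNIV \<times> {\<eta> \<in> Lambda n. \<eta> (hmonom n 0) = 0}"

lemma additive_hom_fst: "additive_hom (S_Lambda n :: ('k::{field,finite} \<times> _) monoid) fst"
  unfolding additive_hom_def additive_hom_axioms_def
  by (auto simp: group_S_Lambda S_Lambda_mult)

lemma additive_hom_eval_x_power: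
  "additive_hom (S_Lambda n :: ('k::{field,finite} \<times> _) monoid) (\<lambda>x. snd x (hmonom n 0))"
  unfolding additive_hom_def additive_hom_axioms_def
  by (auto simp: group_S_Lambda S_Lambda_mult S_Lambda_carrier uact_hmonom_0)

lemma V_sub_eq_kernel:
  "V_sub n = {x \<in> carrier (S_Lambda n :: ('k::{field,finite} \<times> _) monoid). fst x = 0}"
  by (auto simp: V_sub_def S_Lambda_carrier)

lemma M_sub_eq_kernel:
  "M_sub n = {x \<in> carrier (S_Lambda n :: ('k::{field,finite} \<times> _) monoid). snd x (hmonom n 0) = 0}"
  by (auto simp: M_sub_def S_Lambda_carrier)

lemma V_sub_normal: "V_sub n \<lhd> (S_Lambda n :: ('k::{field,finite} \<times> _) monoid)"
  unfolding V_sub_eq_kernel by (rule additive_hom.kernel_normal[OF additive_hom_fst])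

lemma M_sub_normal: "M_sub n \<lhd> (S_Lambda n :: ('k::{field,finite} \<times> _) monoid)"
  unfolding M_sub_eq_kernel by (rule additive_hom.kernel_normal[OF additive_hom_eval_x_power])

lemma card_V_sub: "card (V_sub n :: ('k::{field,finite} \<times> _) set) = card (UNIV :: 'k set) ^ (n + 1)"
proof -
  have inj: "inj_on (\<lambda>\<eta>. (0::'k, \<eta>)) (Lambda n :: ('k poly poly \<Rightarrow> 'k) set)"
    by (simp add: inj_on_def)
  have "V_sub n = (\<lambda>\<eta>. (0::'k, \<eta>)) ` Lambda n" by (auto simp: V_sub_def)
  then show ?thesis using card_image[OF inj] card_Lambda by simp
qed

lemma card_M_sub: "card (M_sub n :: ('k::{field,finite} \<times> _) set) = card (UNIV :: 'k set) ^ (n + 1)"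
  by (simp add: M_sub_def card_cartesian_product card_Lambda_vanishing_x_power)

lemma finite_carrier_S_Lambda: "finite (carrier (S_Lambda n :: ('k::{field,finite} \<times> _) monoid))"
proof -
  have "finite (Lambda n :: ('k poly poly \<Rightarrow> 'k) set)"
    by (rule card_ge_0_finite) (simp add: card_Lambda card_gt_0_iff)
  then show ?thesis by (simp add: S_Lambda_carrier)
qed

lemma card_rcosets_S_Lambda_iff:
  assumes "subgroup N (S_Lambda n :: ('k::{field,finite} \<times> _) monoid)"
  shows "card (rcosets\<^bsub>S_Lambda n\<^esub> N) = card (UNIV :: 'k set)
           \<longleftrightarrow> card N = card (UNIV :: 'k set) ^ (n + 1)"
proof -
  let ?q = "card (UNIV :: 'k set)"
  have lagrange: "card (rcosets\<^bsub>S_Lambda n\<^esub> N) * card N = ?q * ?q ^ (n + 1)"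
    using group.lagrange[OF group_S_Lambda assms]
    by (simp add: Coset.order_def S_Lambda_carrier card_cartesian_product card_Lambda)
  have "?q > 0" by (simp add: card_gt_0_iff)
  show ?thesis
  proof
    assume "card (rcosets\<^bsub>S_Lambda n\<^esub> N) = ?q"
    then have "?q * card N = ?q * ?q ^ (n + 1)" using lagrange by simp
    then show "card N = ?q ^ (n + 1)" using \<open>?q > 0\<close> by simp
  next
    assume "card N = ?q ^ (n + 1)"
    then have "card (rcosets\<^bsub>S_Lambda n\<^esub> N) * ?q ^ (n + 1) = ?q * ?q ^ (n + 1)" using lagrange by simp
    then show "card (rcosets\<^bsub>S_Lambda n\<^esub> N) = ?q" using \<open>?q > 0\<close> by simp
  qed
qed

lemma has_exponent_S_LambdaI:
  fixes p :: nat
  assumes "CHAR('k::{field,finite}) = p" and "Factorial_Ring.prime p" and "odd p"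
    and "N \<subseteq> UNIV \<times> Lambda p" and "(0, hdual p 1) \<in> N"
    and "\<And>c \<eta>. (c, \<eta>) \<in> N \<Longrightarrow> c = 0 \<or> \<eta> (hmonom p 0) = 0"
  shows "has_exponent (S_Lambda p :: ('k \<times> _) monoid) N p"
proof (rule has_exponent_primeI[OF group_S_Lambda \<open>Factorial_Ring.prime p\<close>])
  show "N \<subseteq> carrier (S_Lambda p)" using assms(4) by (simp add: S_Lambda_carrier)
  show "(0, hdual p 1) \<in> N" by fact
  have "hdual p 1 (hmonom p 1) = (1 :: 'k)"
    using prime_gt_0_nat[OF assms(2)] by (simp add: hdual_hmonom)
  then show "(0, hdual p 1) \<noteq> \<one>\<^bsub>S_Lambda p :: ('k \<times> _) monoid\<^esub>"
    by (auto simp: S_Lambda_one)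
  fix x assume x: "x \<in> N"
  obtain c \<eta> where x_eq: "x = (c, \<eta>)" by (cases x)
  have "\<eta> \<in> Lambda p" using x x_eq assms(4) by auto
  moreover have "c = 0 \<or> \<eta> (hmonom p 0) = 0" using assms(6) x x_eq by simp
  ultimately show "x [^]\<^bsub>S_Lambda p\<^esub> p = \<one>\<^bsub>S_Lambda p\<^esub>"
    using S_Lambda_pow_p_eq_one_iff[OF assms(1-3)] x_eq by simp
qed

lemma has_exponent_V_sub:
  assumes "CHAR('k::{field,finite}) = p" and "Factorial_Ring.prime p" and "odd p"
  shows "has_exponent (S_Lambda p :: ('k \<times> _) monoid) (V_sub p) p"
  by (rule has_exponent_S_LambdaI[OF assms]) (auto simp: V_sub_def hdual_Lambda)

lemma has_exponent_M_sub:
  assumes "CHAR('k::{field,finite}) = p" and "Factorial_Ring.prime p" and "odd p"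
  shows "has_exponent (S_Lambda p :: ('k \<times> _) monoid) (M_sub p) p"
  by (rule has_exponent_S_LambdaI[OF assms])
     (use prime_gt_0_nat[OF assms(2)] in \<open>auto simp: M_sub_def hdual_Lambda hdual_hmonom\<close>)

lemma exponent_p_subgroup_subset_V_or_M:
  assumes CHAR: "CHAR('k::{field,finite}) = p" and prime: "Factorial_Ring.prime p" and "odd p"
    and N: "subgroup N (S_Lambda p :: ('k \<times> _) monoid)"
    and killed: "\<And>x. x \<in> N \<Longrightarrow> x [^]\<^bsub>S_Lambda p :: ('k \<times> _) monoid\<^esub> p = \<one>\<^bsub>S_Lambda p :: ('k \<times> _) monoid\<^esub>"
  shows "N \<subseteq> V_sub p \<or> N \<subseteq> M_sub p"
proof (cases "\<exists>x\<in>N. fst x \<noteq> 0")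
  case False
  then show ?thesis using subgroup.subset[OF N] by (force simp: V_sub_def S_Lambda_carrier)
next
  case True
  have order_p: "\<eta> (hmonom p 0) = 0" if "(c, \<eta>) \<in> N" "c \<noteq> 0" for c \<eta>
  proof -
    have "\<eta> \<in> Lambda p" using that(1) subgroup.subset[OF N] by (auto simp: S_Lambda_carrier)
    then show ?thesis
      using killed[OF that(1)] S_Lambda_pow_p_eq_one_iff[OF CHAR prime \<open>odd p\<close>] that(2) by simp
  qed
  obtain c \<eta> where x: "(c, \<eta>) \<in> N" "c \<noteq> 0" using True by auto
  \<comment> \<open>elements (0, \<xi>) of N are handled through the product (c, \<eta>)(0, \<xi>) = (c, \<eta> + \<xi>)\<close>
  have "N \<subseteq> M_sub p"
  proof
    fix y assume y: "y \<in> N"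
    obtain d \<xi> where y_eq: "y = (d, \<xi>)" by (cases y)
    have \<eta>: "\<eta> \<in> Lambda p" and \<xi>: "\<xi> \<in> Lambda p"
      using x y y_eq subgroup.subset[OF N] by (auto simp: S_Lambda_carrier)
    have "\<xi> (hmonom p 0) = 0"
    proof (cases "d = 0")
      case False
      then show ?thesis using order_p[of d \<xi>] y y_eq by blast
    next
      case True
      have "(c, \<eta>) \<otimes>\<^bsub>S_Lambda p\<^esub> y \<in> N" using x(1) y subgroup.m_closed[OF N] by blast
      then have "(c, \<eta> + \<xi>) \<in> N" using True y_eq \<eta> by (simp add: S_Lambda_mult uact_0)
      then have "(\<eta> + \<xi>) (hmonom p 0) = 0" using x(2) by (rule order_p)
      then show ?thesis using order_p[OF x] by simp
    qed
    then show "y \<in> M_sub p" using y_eq \<xi> by (simp add: M_sub_def)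
  qed
  then show ?thesis by blast
qed

lemma normal_index_exponent_p_subgroups:
  assumes CHAR: "CHAR('k::{field,finite}) = p" and prime: "Factorial_Ring.prime p" and "odd p"
  defines "S \<equiv> S_Lambda p :: ('k \<times> _) monoid"
  shows "{N. N \<lhd> S \<and> card (rcosets\<^bsub>S\<^esub> N) = card (UNIV :: 'k set) \<and> has_exponent S N p}
           = {V_sub p, M_sub p}"
proof
  show "{N. N \<lhd> S \<and> card (rcosets\<^bsub>S\<^esub> N) = card (UNIV :: 'k set) \<and> has_exponent S N p}
          \<subseteq> {V_sub p, M_sub p}"
  proof
    fix N assume "N \<in> {N. N \<lhd> S \<and> card (rcosets\<^bsub>S\<^esub> N) = card (UNIV :: 'k set) \<and> has_exponent S N p}"
    then have N: "N \<lhd> S" "card (rcosets\<^bsub>S\<^esub> N) = card (UNIV :: 'k set)" "has_exponent S N p"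
      by simp_all
    have subgroup: "subgroup N S" using N(1) by (rule normal_imp_subgroup)
    have card_N: "card N = card (UNIV :: 'k set) ^ (p + 1)"
      using card_rcosets_S_Lambda_iff[OF subgroup[unfolded S_def]] N(2) by (simp add: S_def)
    have finite: "finite (V_sub p :: ('k \<times> _) set)" "finite (M_sub p :: ('k \<times> _) set)"
      by (auto simp: V_sub_eq_kernel M_sub_eq_kernel finite_carrier_S_Lambda)
    have "N \<subseteq> V_sub p \<or> N \<subseteq> M_sub p"
      using exponent_p_subgroup_subset_V_or_M[OF CHAR prime \<open>odd p\<close>] subgroup N(3)
      by (simp add: S_def has_exponent_def)
    then show "N \<in> {V_sub p, M_sub p}"
    proof (elim disjE)
      assume "N \<subseteq> V_sub p"
      then have "N = V_sub p"
        by (rule card_subset_eq[OF finite(1)]) (simp add: card_N card_V_sub)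
      then show ?thesis by simp
    next
      assume "N \<subseteq> M_sub p"
      then have "N = M_sub p"
        by (rule card_subset_eq[OF finite(2)]) (simp add: card_N card_M_sub)
      then show ?thesis by simp
    qed
  qed
  show "{V_sub p, M_sub p}
          \<subseteq> {N. N \<lhd> S \<and> card (rcosets\<^bsub>S\<^esub> N) = card (UNIV :: 'k set) \<and> has_exponent S N p}"
  proof -
    have "card (rcosets\<^bsub>S\<^esub> (V_sub p)) = card (UNIV :: 'k set)"
      using card_rcosets_S_Lambda_iff[OF normal_imp_subgroup[OF V_sub_normal]] card_V_sub
      unfolding S_def by blast
    moreover have "card (rcosets\<^bsub>S\<^esub> (M_sub p)) = card (UNIV :: 'k set)"
      using card_rcosets_S_Lambda_iff[OF normal_imp_subgroup[OF M_sub_normal]] card_M_sub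
      unfolding S_def by blast
    ultimately show ?thesis
      using V_sub_normal M_sub_normal has_exponent_V_sub[OF assms(1-3)] has_exponent_M_sub[OF assms(1-3)]
      unfolding S_def by blast
  qed
qed

lemma V_sub_commute:
  "x \<in> V_sub n \<Longrightarrow> y \<in> V_sub n \<Longrightarrow>
     x \<otimes>\<^bsub>S_Lambda n\<^esub> y = y \<otimes>\<^bsub>S_Lambda n :: ('k::{field,finite} \<times> _) monoid\<^esub> x"
  by (auto simp: V_sub_def S_Lambda_mult uact_0 add.commute)

lemma M_sub_noncommutative:
  assumes "CHAR('k::{field,finite}) = p" and "Factorial_Ring.prime p" and "odd p"
  shows "(1, 0) \<otimes>\<^bsub>S_Lambda p\<^esub> (0, hdual p 1)
           \<noteq> (0, hdual p 1) \<otimes>\<^bsub>S_Lambda p :: ('k \<times> _) monoid\<^esub> (1, 0)"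
proof -
  have p3: "3 \<le> p" using odd_prime_ge_3 assms(2,3) .
  have "(2::'k) \<noteq> 0"
    using assms(1) p3 of_nat_eq_0_iff_char_dvd[where 'a='k, of 2] by (auto dest: dvd_imp_le)
  moreover have "snd ((1, 0) \<otimes>\<^bsub>S_Lambda p\<^esub> (0, hdual p 1)) (hmonom p 2) = (0 :: 'k)"
    using p3 by (simp add: S_Lambda_mult uact_zero hdual_hmonom)
  moreover have "snd ((0, hdual p 1) \<otimes>\<^bsub>S_Lambda p :: ('k \<times> _) monoid\<^esub> (1, 0)) (hmonom p 2) = - 2"
    using p3 by (simp add: S_Lambda_mult uact_hdual_hmonom)
  ultimately have "snd ((1, 0) \<otimes>\<^bsub>S_Lambda p\<^esub> (0, hdual p 1)) (hmonom p 2)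
      \<noteq> snd ((0, hdual p 1) \<otimes>\<^bsub>S_Lambda p :: ('k \<times> _) monoid\<^esub> (1, 0)) (hmonom p 2)"
    by simp
  then show ?thesis by (rule contrapos_nn) simp
qed

lemma characteristic_M_sub:
  assumes CHAR: "CHAR('k::{field,finite}) = p" and prime: "Factorial_Ring.prime p" and "odd p"
  shows "characteristic (S_Lambda p :: ('k \<times> _) monoid) (M_sub p)"
proof (rule characteristic_if_unique_noncommutative[OF _ _ normal_index_exponent_p_subgroups[OF assms]])
  show "group (S_Lambda p :: ('k \<times> _) monoid)" by (rule group_S_Lambda)
  show "finite (carrier (S_Lambda p :: ('k \<times> _) monoid))" by (rule finite_carrier_S_Lambda)
  show "\<And>x y. x \<in> V_sub p \<Longrightarrow> y \<in> V_sub p \<Longrightarrow> x \<otimes>\<^bsub>S_Lambda p\<^esub> y = y \<otimes>\<^bsub>S_Lambda p :: ('k \<times> _) monoid\<^esub> x"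
    by (rule V_sub_commute)
  show "(1, 0) \<in> (M_sub p :: ('k \<times> _) set)" by (simp add: M_sub_def Lambda_zero)
  show "(0, hdual p 1) \<in> (M_sub p :: ('k \<times> _) set)"
    using prime_gt_0_nat[OF prime] by (simp add: M_sub_def hdual_Lambda hdual_hmonom)
  show "(1, 0) \<otimes>\<^bsub>S_Lambda p\<^esub> (0, hdual p 1) \<noteq> (0, hdual p 1) \<otimes>\<^bsub>S_Lambda p :: ('k \<times> _) monoid\<^esub> (1, 0)"
    by (rule M_sub_noncommutative[OF assms])
qed

section \<open>The commutator subgroup [V, S]\<close>

lemma comm_sub_subset_V_Int_M:
  "comm_sub (S_Lambda n) (V_sub n) (carrier (S_Lambda n))
     \<subseteq> V_sub n \<inter> (M_sub n :: ('k::{field,finite} \<times> _) set)"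
proof -
  have V: "V_sub n \<subseteq> carrier (S_Lambda n :: ('k \<times> _) monoid)" by (auto simp: V_sub_eq_kernel)
  have "comm_sub (S_Lambda n) (V_sub n) (carrier (S_Lambda n)) \<subseteq> (V_sub n :: ('k \<times> _) set)"
    using additive_hom.comm_sub_subset_kernel[OF additive_hom_fst V subset_refl]
    by (simp only: V_sub_eq_kernel[symmetric])
  moreover have "comm_sub (S_Lambda n) (V_sub n) (carrier (S_Lambda n)) \<subseteq> (M_sub n :: ('k \<times> _) set)"
    using additive_hom.comm_sub_subset_kernel[OF additive_hom_eval_x_power V subset_refl]
    by (simp only: M_sub_eq_kernel[symmetric])
  ultimately show ?thesis by blast
qed

definition comm_part :: "nat \<Rightarrow> ('k::{field,finite} poly poly \<Rightarrow> 'k) set" where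
  "comm_part n = {\<eta>. (0, \<eta>) \<in> comm_sub (S_Lambda n) (V_sub n) (carrier (S_Lambda n))}"

(* The largest K-subspace inside comm_part n; working with it avoids proving that
   comm_part n is closed under scalar multiplication. *)
definition comm_subspace :: "nat \<Rightarrow> ('k::{field,finite} poly poly \<Rightarrow> 'k) set" where
  "comm_subspace n = {\<eta> \<in> Lambda n. \<forall>s. (\<lambda>w. s * \<eta> w) \<in> comm_part n}"

lemma uact_diff_in_comm_part:
  fixes \<xi> :: "'k::{field,finite} poly poly \<Rightarrow> 'k"
  assumes \<xi>: "\<xi> \<in> Lambda n"
  shows "uact n t \<xi> - \<xi> \<in> comm_part n"
proof -
  let ?S = "S_Lambda n :: ('k \<times> _) monoid"
  have "inv\<^bsub>?S\<^esub> (0, - \<xi>) = (0, \<xi>)"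
    using S_Lambda_inv[OF Lambda_uminus[OF \<xi>], of 0] uact_0[OF Lambda_uminus[OF \<xi>]] by simp
  moreover have "inv\<^bsub>?S\<^esub> (-t, 0) = (t, 0)"
    using S_Lambda_inv[OF Lambda_zero, of n "-t"] by (simp add: uact_zero)
  moreover have "uact n 0 (- uact n (-t) \<xi>) = - uact n (-t) \<xi>"
    using \<xi> by (intro uact_0 Lambda_uminus uact_Lambda)
  moreover have "uact n t (uact n (-t) \<xi>) = \<xi>" using \<xi> by (simp add: uact_uact uact_0)
  ultimately have "(0, - \<xi>) \<otimes>\<^bsub>?S\<^esub> (-t, 0) \<otimes>\<^bsub>?S\<^esub> inv\<^bsub>?S\<^esub> (0, - \<xi>) \<otimes>\<^bsub>?S\<^esub> inv\<^bsub>?S\<^esub> (-t, 0)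
      = (0, uact n t \<xi> - \<xi>)"
    by (simp add: S_Lambda_mult uact_uminus uact_diff)
  moreover have "(0, - \<xi>) \<in> V_sub n" using \<xi> by (simp add: V_sub_def Lambda_uminus)
  moreover have "(-t, 0) \<in> carrier ?S" by (simp add: S_Lambda_carrier Lambda_zero)
  ultimately have "(0, uact n t \<xi> - \<xi>)
      \<in> {a \<otimes>\<^bsub>?S\<^esub> b \<otimes>\<^bsub>?S\<^esub> inv\<^bsub>?S\<^esub> a \<otimes>\<^bsub>?S\<^esub> inv\<^bsub>?S\<^esub> b | a b. a \<in> V_sub n \<and> b \<in> carrier ?S}"
    by (intro CollectI exI[of _ "(0, - \<xi>)"] exI[of _ "(-t, 0)"]) auto
  then have "(0, uact n t \<xi> - \<xi>) \<in> comm_sub ?S (V_sub n) (carrier ?S)"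
    unfolding comm_sub_def by (rule generate.incl)
  then show ?thesis by (simp add: comm_part_def)
qed

lemma comm_part_Lambda: "\<eta> \<in> comm_part n \<Longrightarrow> \<eta> \<in> Lambda n"
  using comm_sub_subset_V_Int_M by (auto simp: comm_part_def V_sub_def)

lemma comm_part_add:
  assumes "\<eta> \<in> comm_part n" and "\<xi> \<in> comm_part n"
  shows "\<eta> + \<xi> \<in> comm_part n"
proof -
  have "(0, \<eta>) \<otimes>\<^bsub>S_Lambda n\<^esub> (0, \<xi>) \<in> comm_sub (S_Lambda n) (V_sub n) (carrier (S_Lambda n))"
    using assms unfolding comm_part_def comm_sub_def by (intro generate.eng) simp_all
  then show ?thesis
    using comm_part_Lambda[OF assms(1)] by (simp add: comm_part_def S_Lambda_mult uact_0)
qed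

lemma comm_subspace_add: "\<eta> \<in> comm_subspace n \<Longrightarrow> \<xi> \<in> comm_subspace n \<Longrightarrow> \<eta> + \<xi> \<in> comm_subspace n"
proof -
  assume "\<eta> \<in> comm_subspace n" "\<xi> \<in> comm_subspace n"
  moreover have "(\<lambda>w. s * (\<eta> + \<xi>) w) = (\<lambda>w. s * \<eta> w) + (\<lambda>w. s * \<xi> w)" for s
    by (simp add: fun_eq_iff algebra_simps)
  ultimately show ?thesis by (auto simp: comm_subspace_def Lambda_add comm_part_add)
qed

lemma comm_subspace_scale: "\<eta> \<in> comm_subspace n \<Longrightarrow> (\<lambda>w. a * \<eta> w) \<in> comm_subspace n"
  by (auto simp: comm_subspace_def Lambda_scale mult.assoc[symmetric])

lemma comm_subspace_diff: "\<eta> \<in> comm_subspace n \<Longrightarrow> \<xi> \<in> comm_subspace n \<Longrightarrow> \<eta> - \<xi> \<in> comm_subspace n"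
proof -
  assume "\<eta> \<in> comm_subspace n" "\<xi> \<in> comm_subspace n"
  moreover have "\<eta> - \<xi> = \<eta> + (\<lambda>w. (-1) * \<xi> w)" by (simp add: fun_eq_iff)
  ultimately show ?thesis by (simp only:) (intro comm_subspace_add comm_subspace_scale)
qed

lemma comm_part_zero: "0 \<in> comm_part n"
  using generate.one[of "S_Lambda n"] by (simp add: comm_part_def comm_sub_def S_Lambda_one)

lemma comm_subspace_zero: "0 \<in> comm_subspace n"
  using comm_part_zero[unfolded zero_fun_def] by (simp add: comm_subspace_def Lambda_zero)

lemma comm_subspace_sum: "(\<And>i. i \<in> A \<Longrightarrow> g i \<in> comm_subspace n) \<Longrightarrow> sum g A \<in> comm_subspace n"
  by (induction A rule: infinite_finite_induct) (simp_all add: comm_subspace_zero comm_subspace_add)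

lemma uact_diff_in_comm_subspace: "\<xi> \<in> Lambda n \<Longrightarrow> uact n t \<xi> - \<xi> \<in> comm_subspace n"
proof -
  assume \<xi>: "\<xi> \<in> Lambda n"
  have "(\<lambda>w. s * (uact n t \<xi> - \<xi>) w) = uact n t (\<lambda>w. s * \<xi> w) - (\<lambda>w. s * \<xi> w)" for s
    by (simp add: uact_scale fun_eq_iff algebra_simps)
  then show ?thesis
    using \<xi> by (simp add: comm_subspace_def Lambda_diff uact_Lambda uact_diff_in_comm_part Lambda_scale)
qed

lemma comm_subspace_subset_comm_part: "\<eta> \<in> comm_subspace n \<Longrightarrow> \<eta> \<in> comm_part n"
proof -
  assume "\<eta> \<in> comm_subspace n"
  then have "(\<lambda>w. 1 * \<eta> w) \<in> comm_part n" unfolding comm_subspace_def by blast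
  then show ?thesis by simp
qed

lemma comm_subspace_Lambda: "\<eta> \<in> comm_subspace n \<Longrightarrow> \<eta> \<in> Lambda n"
  by (simp add: comm_subspace_def)

lemma comm_subspace_remove_coords:
  fixes v :: "'k::{field,finite} poly poly \<Rightarrow> 'k"
  assumes v: "v \<in> comm_subspace n" and J: "J \<subseteq> {..n}"
    and hdual_J: "\<And>j. j \<in> J \<Longrightarrow> hdual n j \<in> (comm_subspace n :: ('k poly poly \<Rightarrow> 'k) set)"
  shows "v - (\<Sum>j\<in>J. (\<lambda>w. v (hmonom n j) * hdual n j w)) \<in> comm_subspace n"
    and "\<And>i. i \<le> n \<Longrightarrow> (v - (\<Sum>j\<in>J. (\<lambda>w. v (hmonom n j) * hdual n j w))) (hmonom n i)
           = (if i \<in> J then 0 else v (hmonom n i))"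
proof -
  show "v - (\<Sum>j\<in>J. (\<lambda>w. v (hmonom n j) * hdual n j w)) \<in> comm_subspace n"
    using hdual_J by (auto intro!: comm_subspace_diff v comm_subspace_sum comm_subspace_scale)
  fix i assume "i \<le> n"
  then show "(v - (\<Sum>j\<in>J. (\<lambda>w. v (hmonom n j) * hdual n j w))) (hmonom n i)
      = (if i \<in> J then 0 else v (hmonom n i))"
    using sum_hdual_hmonom[OF J \<open>i \<le> n\<close>, of "\<lambda>j. v (hmonom n j)"] by simp
qed

lemma hdual_in_comm_subspace_middle:
  assumes CHAR: "CHAR('k::{field,finite}) = p" and prime: "Factorial_Ring.prime p"
  shows "2 \<le> k \<Longrightarrow> k \<le> p - 1 \<Longrightarrow> (hdual p k :: 'k poly poly \<Rightarrow> 'k) \<in> comm_subspace p"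
proof (induction "p - 1 - k" arbitrary: k rule: less_induct)
  case less
  \<comment> \<open>v has coordinate -k at k, none below k, and none at p since p divides (p choose (k - 1))\<close>
  define v :: "'k poly poly \<Rightarrow> 'k" where "v = uact p 1 (hdual p (k - 1)) - hdual p (k - 1)"
  have v: "v \<in> comm_subspace p" unfolding v_def by (intro uact_diff_in_comm_subspace hdual_Lambda)
  have J: "{k<..<p} \<subseteq> {..p}" by auto
  have hdual_J: "hdual p j \<in> (comm_subspace p :: ('k poly poly \<Rightarrow> 'k) set)" if "j \<in> {k<..<p}" for j
    using that less by (intro less.hyps) auto
  define R where "R = v - (\<Sum>j\<in>{k<..<p}. (\<lambda>w. v (hmonom p j) * hdual p j w))"
  have R: "R \<in> comm_subspace p" unfolding R_def by (rule comm_subspace_remove_coords(1)[OF v J hdual_J])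
  have R_coords: "R (hmonom p i) = (if i \<in> {k<..<p} then 0 else v (hmonom p i))" if "i \<le> p" for i
    unfolding R_def by (rule comm_subspace_remove_coords(2)[OF v J hdual_J that])
  have "k choose (k - 1) = k" using binomial_symmetric[of 1 k] less by simp
  then have v_k: "v (hmonom p k) = - of_nat k"
    using less by (simp add: v_def uact_hdual_hmonom hdual_hmonom)
  have "v (hmonom p k) \<noteq> 0"
    using v_k less CHAR by (auto simp: of_nat_eq_0_iff_char_dvd dest: dvd_imp_le)
  have "p dvd (p choose (k - 1))"
    using less prime_gt_0_nat[OF prime] by (intro dvd_choose_prime prime) auto
  then have v_p: "v (hmonom p p) = 0"
    using less CHAR by (simp add: v_def uact_hdual_hmonom hdual_hmonom of_nat_eq_0_iff_char_dvd)
  have v_below: "v (hmonom p i) = 0" if "i < k" for i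
    using that less by (auto simp: v_def uact_hdual_hmonom hdual_hmonom)
  have "R = (\<lambda>w. v (hmonom p k) * hdual p k w)"
  proof (rule Lambda_eqI)
    show "R \<in> Lambda p" using R by (rule comm_subspace_Lambda)
    show "(\<lambda>w. v (hmonom p k) * hdual p k w) \<in> Lambda p" by (intro Lambda_scale hdual_Lambda)
    fix i assume "i \<le> p"
    then show "R (hmonom p i) = v (hmonom p k) * hdual p k (hmonom p i)"
      using less v_p v_below by (cases "i < k"; cases "i = p") (auto simp: R_coords hdual_hmonom)
  qed
  then have "hdual p k = (\<lambda>w. inverse (v (hmonom p k)) * R w)"
    using \<open>v (hmonom p k) \<noteq> 0\<close> by (simp add: fun_eq_iff)
  then show ?case using comm_subspace_scale[OF R] by simp
qed

lemma hdual_in_comm_subspace_ends: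
  assumes CHAR: "CHAR('k::{field,finite}) = p" and prime: "Factorial_Ring.prime p" and "odd p"
    and c: "(c::'k) ^ p \<noteq> c"
  shows "hdual p 1 \<in> (comm_subspace p :: ('k poly poly \<Rightarrow> 'k) set)"
    and "hdual p p \<in> (comm_subspace p :: ('k poly poly \<Rightarrow> 'k) set)"
proof -
  have p3: "3 \<le> p" using odd_prime_ge_3 prime \<open>odd p\<close> .
  have J: "{1<..<p} \<subseteq> {..p}" by auto
  have hdual_J: "hdual p j \<in> (comm_subspace p :: ('k poly poly \<Rightarrow> 'k) set)" if "j \<in> {1<..<p}" for j
    using that by (intro hdual_in_comm_subspace_middle[OF CHAR prime]) auto
  define v :: "'k \<Rightarrow> 'k poly poly \<Rightarrow> 'k" where "v s = uact p (-s) (hdual p 0) - hdual p 0" for s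
  have v: "v s \<in> comm_subspace p" for s unfolding v_def by (intro uact_diff_in_comm_subspace hdual_Lambda)
  define R where "R s = v s - (\<Sum>j\<in>{1<..<p}. (\<lambda>w. v s (hmonom p j) * hdual p j w))" for s
  have R: "R s \<in> comm_subspace p" for s
    unfolding R_def by (rule comm_subspace_remove_coords(1)[OF v J hdual_J])
  have R_coords: "R s (hmonom p i) = (if i = 1 then s else if i = p then s ^ p else 0)" if "i \<le> p" for s i
    using that p3 comm_subspace_remove_coords(2)[OF v J hdual_J that, folded R_def]
    by (cases "i = 0") (auto simp: v_def uact_hdual_hmonom hdual_hmonom)
  have "(\<lambda>w. c * R 1 w) - R c = (\<lambda>w. (c - c ^ p) * hdual p p w)"
  proof (rule Lambda_eqI)
    show "(\<lambda>w. c * R 1 w) - R c \<in> Lambda p"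
      by (intro Lambda_diff Lambda_scale comm_subspace_Lambda R)
    show "(\<lambda>w. (c - c ^ p) * hdual p p w) \<in> Lambda p" by (intro Lambda_scale hdual_Lambda)
    fix i assume "i \<le> p"
    then show "((\<lambda>w. c * R 1 w) - R c) (hmonom p i) = (c - c ^ p) * hdual p p (hmonom p i)"
      using p3 by (simp add: R_coords hdual_hmonom)
  qed
  then have hdual_p_eq: "hdual p p = (\<lambda>w. inverse (c - c ^ p) * ((\<lambda>w. c * R 1 w) - R c) w)"
    using c by (simp add: fun_eq_iff)
  show hdual_p: "hdual p p \<in> (comm_subspace p :: ('k poly poly \<Rightarrow> 'k) set)"
    unfolding hdual_p_eq by (intro comm_subspace_scale comm_subspace_diff R)
  have "R 1 - hdual p p = hdual p 1"
  proof (rule Lambda_eqI)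
    show "R 1 - hdual p p \<in> Lambda p" by (intro Lambda_diff comm_subspace_Lambda R hdual_Lambda)
    show "hdual p 1 \<in> Lambda p" by (rule hdual_Lambda)
    fix i assume "i \<le> p"
    then show "(R 1 - hdual p p) (hmonom p i) = hdual p 1 (hmonom p i)"
      using p3 by (simp add: R_coords hdual_hmonom)
  qed
  then show "hdual p 1 \<in> (comm_subspace p :: ('k poly poly \<Rightarrow> 'k) set)"
    using comm_subspace_diff[OF R[of 1] hdual_p] by simp
qed

lemma V_Int_M_subset_comm_sub:
  assumes CHAR: "CHAR('k::{field,finite}) = p" and prime: "Factorial_Ring.prime p" and "odd p"
    and c: "(c::'k) ^ p \<noteq> c"
  shows "V_sub p \<inter> (M_sub p :: ('k \<times> _) set) \<subseteq> comm_sub (S_Lambda p) (V_sub p) (carrier (S_Lambda p))"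
proof
  fix x :: "'k \<times> _" assume "x \<in> V_sub p \<inter> M_sub p"
  then obtain \<eta> where x: "x = (0, \<eta>)" and \<eta>: "\<eta> \<in> Lambda p" "\<eta> (hmonom p 0) = 0"
    by (auto simp: V_sub_def M_sub_def)
  have hdual_in: "hdual p k \<in> (comm_subspace p :: ('k poly poly \<Rightarrow> 'k) set)" if k: "k \<in> {1..p}" for k
  proof -
    consider "k = 1" | "k = p" | "2 \<le> k \<and> k \<le> p - 1" using k by force
    then show ?thesis
      using hdual_in_comm_subspace_ends[OF CHAR prime \<open>odd p\<close> c]
        hdual_in_comm_subspace_middle[OF CHAR prime] by cases auto
  qed
  have \<eta>_eq: "\<eta> = (\<Sum>k\<in>{1..p}. (\<lambda>w. \<eta> (hmonom p k) * hdual p k w))"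
  proof (rule Lambda_eqI)
    show "(\<Sum>k\<in>{1..p}. (\<lambda>w. \<eta> (hmonom p k) * hdual p k w)) \<in> Lambda p"
      by (intro Lambda_sum Lambda_scale hdual_Lambda)
    fix i assume "i \<le> p"
    then show "\<eta> (hmonom p i) = (\<Sum>k\<in>{1..p}. (\<lambda>w. \<eta> (hmonom p k) * hdual p k w)) (hmonom p i)"
      using \<eta>(2) sum_hdual_hmonom[where J="{1..p}" and n=p and i=i and a="\<lambda>k. \<eta> (hmonom p k)"]
      by (cases "i = 0") auto
  qed (rule \<eta>(1))
  have "\<eta> \<in> comm_subspace p"
    by (subst \<eta>_eq) (intro comm_subspace_sum comm_subspace_scale hdual_in)
  then have "\<eta> \<in> comm_part p" by (rule comm_subspace_subset_comm_part)
  then show "x \<in> comm_sub (S_Lambda p) (V_sub p) (carrier (S_Lambda p))"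
    by (simp add: x comm_part_def)
qed

lemma comm_sub_V_S_Lambda:
  assumes "CHAR('k::{field,finite}) = p" and "Factorial_Ring.prime p" and "odd p"
    and "p < card (UNIV :: 'k set)"
  shows "comm_sub (S_Lambda p) (V_sub p) (carrier (S_Lambda p)) = V_sub p \<inter> (M_sub p :: ('k \<times> _) set)"
proof -
  obtain c :: 'k where "c ^ p \<noteq> c"
    using ex_power_ne_self prime_ge_2_nat[OF assms(2)] assms(4) by blast
  then show ?thesis
    using comm_sub_subset_V_Int_M V_Int_M_subset_comm_sub[OF assms(1-3)] by blast
qed

lemma U_sub_mult_V_Int_M:
  "U_sub n <#>\<^bsub>S_Lambda n\<^esub> (V_sub n \<inter> M_sub n) = (M_sub n :: ('k::{field,finite} \<times> _) set)"
proof -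
  have mult: "(c, \<lambda>_. 0) \<otimes>\<^bsub>S_Lambda n\<^esub> (0, \<eta>) = (c, \<eta>)" for c :: 'k and \<eta>
    using uact_zero[of n 0] by (simp add: S_Lambda_mult zero_fun_def)
  show ?thesis
  proof
    show "U_sub n <#>\<^bsub>S_Lambda n\<^esub> (V_sub n \<inter> M_sub n) \<subseteq> (M_sub n :: ('k \<times> _) set)"
      by (auto simp: set_mult_def U_sub_def V_sub_def M_sub_def mult)
    show "(M_sub n :: ('k \<times> _) set) \<subseteq> U_sub n <#>\<^bsub>S_Lambda n\<^esub> (V_sub n \<inter> M_sub n)"
    proof
      fix x :: "'k \<times> _" assume "x \<in> M_sub n"
      then obtain c \<eta> where "x = (c, \<eta>)" "\<eta> \<in> Lambda n" "\<eta> (hmonom n 0) = 0"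
        by (auto simp: M_sub_def)
      then show "x \<in> U_sub n <#>\<^bsub>S_Lambda n\<^esub> (V_sub n \<inter> M_sub n)"
        unfolding set_mult_def U_sub_def V_sub_def M_sub_def using mult[symmetric] by blast
    qed
  qed
qed

theorem lemma2p17:
  fixes p m :: nat
  assumes "Factorial_Ring.prime p" and "odd p" and "m > 1"
    and "card (UNIV :: 'k set) = p ^ m"
  defines "S \<equiv> (S_Lambda p :: ('k::{field,finite} \<times> ('k poly poly \<Rightarrow> 'k)) monoid)"
  shows "{N. N \<lhd> S \<and> card (rcosets\<^bsub>S\<^esub> N) = p ^ m \<and> has_exponent S N p}
           = {V_sub p, U_sub p <#>\<^bsub>S\<^esub> comm_sub S (V_sub p) (carrier S)}
         \<and> characteristic S (U_sub p <#>\<^bsub>S\<^esub> comm_sub S (V_sub p) (carrier S))"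
proof -
  have CHAR: "CHAR('k) = p" using CHAR_eq_if_card_prime_power assms(1,4) .
  have "p < p ^ m"
    using power_strict_increasing_iff[of p 1 m] assms(3) prime_gt_1_nat[OF assms(1)] by simp
  then have "U_sub p <#>\<^bsub>S\<^esub> comm_sub S (V_sub p) (carrier S) = M_sub p"
    unfolding S_def using comm_sub_V_S_Lambda[OF CHAR assms(1,2)] U_sub_mult_V_Int_M assms(4) by simp
  moreover have "{N. N \<lhd> S \<and> card (rcosets\<^bsub>S\<^esub> N) = p ^ m \<and> has_exponent S N p} = {V_sub p, M_sub p}"
    using normal_index_exponent_p_subgroups[OF CHAR assms(1,2)] assms(4) by (simp add: S_def)
  moreover have "characteristic S (M_sub p)"
    unfolding S_def by (rule characteristic_M_sub[OF CHAR assms(1,2)])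
  ultimately show ?thesis by simp
qed

end
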